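(* Let $d=2$ and suppose the channel is a scalar Rayleigh fading channel with zero-forcing equalization: given $W^{(l_0)}=(\mathbf I_2,\mathbf 0)$, the deployed channel weights are $W'^{(l_0)}=(\mathbf I_2,B')$ where $B'\in\mathbb R^2$ is the real representation $(\mathrm{Re},\mathrm{Im})$ of $N_0/(\sqrt P H_0)$, with $H_0\sim\mathcal{CN}(0,1)$ and $N_0\sim\mathcal{CN}(0,\sigma_0^2)$ independent, $P>0$, $\gamma=P/\sigma_0^2$. Take the channel-layer metric $d^{(l_0)}((M',B'),(M,B))=\|M'-M\|_{op}+\|B'-B\|_2$. Assume that for every $w\in\mathcal W$ the loss $\ell(w,Z)$, $Z\sim P_Z$, is $\sigma$-sub-Gaussian and that for every $z$, $w\mapsto\ell(w,z)$ is $K$-Lipschitz with respect to $d_{\mathcal W}$. Then the channel penalty equals $\Omega=\mathbb E[d^{(l_0)}(W'^{(l_0)},(\mathbf I_2,\mathbf 0))]=\frac{\pi}{2\sqrt\gamma}$, and for every data-independent distribution $Q_{\tilde W}$ on $\tilde{\mathcal W}$, every $k>0$ and every $\epsilon\in(0,1)$, with probability at least $1-\epsilon$ over $S\sim P_Z^n$, $$\Delta\le\frac{k\sigma^2}{2n}+\frac{D(P_{\tilde W|S}\|Q_{\tilde W})-\log\epsilon}{k}+\frac{\pi K}{2\sqrt\gamma}.$$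
   Context: Setting. Let $\mathcal Z=\mathcal X\times\mathcal Y$ be an instance space with data distribution $P_Z$, and let $S=(Z_1,\dots,Z_n)\sim P_Z^{n}$ be a training set of $n$ i.i.d. samples. An augmented network has $L+1$ layers with weights $W=(W^{(1)},\dots,W^{(L+1)})\in\mathcal W=\mathcal W^{(1)}\times\cdots\times\mathcal W^{(L+1)}$. A distinguished index $l_0$ is the channel layer: $\mathcal W^{(l_0)}=\mathbb R^{d\times d}\times\mathbb R^{d}$, with weights $W^{(l_0)}=(M^{(l_0)},B^{(l_0)})$ acting on a feature $f\in\mathbb R^d$ by $f\mapsto M^{(l_0)}f+B^{(l_0)}$. The other weights $\tilde W=(W^{(l)})_{l\ne l_0}\in\tilde{\mathcal W}=\prod_{l\neq l_0}\mathcal W^{(l)}$ are the learnable weights. A learning algorithm is a Markov kernel $P_{\tilde W|S}$ from $\mathcal Z^n$ to $\tilde{\mathcal W}$; the channel-free training distribution on $\mathcal W$ is $P_{W|S}=P_{\tilde W|S}\otimes\delta_{(\mathbf I_d,\mathbf 0)}$ (channel layer fixed to identity matrix and zero bias). A channel is a Markov kernel $P_{W'^{(l_0)}|W^{(l_0)}}$ on $\mathcal W^{(l_0)}$; the deployment kernel $P_{W'|W}$ sets $W'^{(l)}=W^{(l)}$ for all $l\ne l_0$ and draws $W'^{(l_0)}\sim P_{W'^{(l_0)}|W^{(l_0)}}(\cdot\,|\,W^{(l_0)})$ independently of everything else. The joint distribution on $\mathcal W\times\mathcal W$ is $P_{W'W|S}(W',W|S)=P_{W'|W}(W'|W)P_{W|S}(W|S)$,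 and $P_{W'|S}$ denotes its marginal in $W'$. For a loss $\ell:\mathcal W\times\mathcal Z\to[0,\infty)$ let $L(w)=\mathbb E_{Z\sim P_Z}[\ell(w,Z)]$ and $\hat L(w,S)=\frac1n\sum_{i=1}^n\ell(w,Z_i)$; for a distribution $P$ on $\mathcal W$, $L(P)=\int L(w)P(dw)$ and $\hat L_S(P)=\int\hat L(w,S)P(dw)$. The wireless generalization error is $\Delta=L(P_{W'|S})-\hat L_S(P_{W|S})$. The metric on $\mathcal W$ is $d_{\mathcal W}(W',W)=\sum_{l=1}^{L+1}d^{(l)}(W'^{(l)},W^{(l)})$ where each $d^{(l)}$ is a metric on $\mathcal W^{(l)}$. "$\sigma$-sub-Gaussian" means $\log\mathbb E[e^{\lambda(\ell(w,Z)-L(w))}]\le\lambda^2\sigma^2/2$ for all $\lambda\in\mathbb R$; "$K$-Lipschitz" means $|\ell(w,z)-\ell(w',z)|\le K\,d_{\mathcal W}(w,w')$. "Data-independent" means not depending on $S$. $D(\cdot\|\cdot)$ is the Kullback–Leibler divergence (natural logarithm). $\|\cdot\|_{op}$ is the operator (spectral) norm. $\mathcal{CN}(0,s^2)$ denotes the circularly symmetric complex Gaussian with $\mathbb E|X|^2=s^2$. *)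

theory Defs
  imports "HOL-Probability.Probability"
begin

text \<open>Note that the library constant
  KL_divergence b M N is the divergence of N relative to M.\<close>

definition kl_div :: "'a measure \<Rightarrow> 'a measure \<Rightarrow> ereal" where
  "kl_div P Q =
     (if absolutely_continuous Q P \<and> integrable P (entropy_density (exp 1) Q P)
      then ereal (KL_divergence (exp 1) Q P) else \<infinity>)"

text \<open>Real and imaginary parts independent N(0, s^2/2), so that E|X|^2 = s^2.\<close>

definition cgauss :: "real \<Rightarrow> complex measure" where
  "cgauss s = distr
     (density lborel (normal_density 0 (s / sqrt 2)) \<Otimes>\<^sub>M density lborel (normal_density 0 (s / sqrt 2)))
     borel (\<lambda>(x, y). Complex x y)"

definition re_im :: "complex \<Rightarrow> real ^ 2" where
  "re_im z = (\<chi> i. if i = 1 then Re z else Im z)"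

type_synonym chw = "(real ^ 2 ^ 2) \<times> (real ^ 2)"

definition d_ch :: "chw \<Rightarrow> chw \<Rightarrow> real" where
  "d_ch w' w = onorm (\<lambda>x. (fst w' - fst w) *v x) + norm (snd w' - snd w)"

definition d_W :: "('t \<Rightarrow> 't \<Rightarrow> real) \<Rightarrow> ('t \<times> chw) \<Rightarrow> ('t \<times> chw) \<Rightarrow> real" where
  "d_W dt w' w = dt (fst w') (fst w) + d_ch (snd w') (snd w)"

definition is_metric_on :: "'t set \<Rightarrow> ('t \<Rightarrow> 't \<Rightarrow> real) \<Rightarrow> bool" where
  "is_metric_on A dt \<longleftrightarrow>
     (\<forall>x\<in>A. \<forall>y\<in>A. dt x y \<ge> 0 \<and> (dt x y = 0 \<longleftrightarrow> x = y) \<and> dt x y = dt y x) \<and>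
     (\<forall>x\<in>A. \<forall>y\<in>A. \<forall>z\<in>A. dt x z \<le> dt x y + dt y z)"

definition pop_risk :: "'z measure \<Rightarrow> ('w \<Rightarrow> 'z \<Rightarrow> real) \<Rightarrow> 'w \<Rightarrow> real" where
  "pop_risk PZ loss w = (\<integral>z. loss w z \<partial>PZ)"

definition emp_risk :: "nat \<Rightarrow> ('w \<Rightarrow> 'z \<Rightarrow> real) \<Rightarrow> 'w \<Rightarrow> (nat \<Rightarrow> 'z) \<Rightarrow> real" where
  "emp_risk n loss w S = (1 / real n) * (\<Sum>i<n. loss w (S i))"

definition sub_gaussian :: "'z measure \<Rightarrow> ('z \<Rightarrow> real) \<Rightarrow> real \<Rightarrow> bool" where
  "sub_gaussian PZ X \<sigma> \<longleftrightarrow> integrable PZ X \<and>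
     (\<forall>t::real. integrable PZ (\<lambda>z. exp (t * (X z - (\<integral>z'. X z' \<partial>PZ)))) \<and>
        ln (\<integral>z. exp (t * (X z - (\<integral>z'. X z' \<partial>PZ))) \<partial>PZ) \<le> t\<^sup>2 * \<sigma>\<^sup>2 / 2)"

definition train_dist :: "'t measure \<Rightarrow> 't measure \<Rightarrow> ('t \<times> chw) measure" where
  "train_dist MT PT = PT \<Otimes>\<^sub>M return borel (mat 1, 0)"

definition deploy_dist :: "'t measure \<Rightarrow> (chw \<Rightarrow> chw measure) \<Rightarrow> ('t \<times> chw) measure \<Rightarrow> ('t \<times> chw) measure" where
  "deploy_dist MT chan PW = PW \<bind> (\<lambda>w. return MT (fst w) \<Otimes>\<^sub>M chan (snd w))"

end

theory Submission
  imports Defs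
begin

text \<open>During training the channel layer is the identity, so after deployment only the channel
  layer moves, and by the Lipschitz condition the deployed population risk differs from the
  channel-free one by at most K times the mean channel distance \<Omega>. Zero forcing only perturbs
  the bias, by N0 / (sqrt P H0); by independence and polar coordinates E|N0| = \<sigma>0 sqrt pi / 2
  and E(1 / |H0|) = sqrt pi, so \<Omega> = pi / (2 sqrt \<gamma>). The remaining channel-free gap obeys
  the PAC-Bayes bound: the Donsker-Varadhan change of measure from the posterior to the prior Q,
  Fubini together with the sub-Gaussian moment generating function of the empirical mean, and
  Markov's inequality over the sample.\<close>

section \<open>Gaussian integrals in polar coordinates\<close>

lemma nn_integral_lborel_abs:
  fixes G :: "real \<Rightarrow> ennreal"
  assumes [measurable]: "G \<in> borel_measurable borel"
  shows "(\<integral>\<^sup>+x. G \<bar>x\<bar> \<partial>lborel) = 2 * (\<integral>\<^sup>+x. G x * indicator {0<..} x \<partial>lborel)"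
proof -
  have "(\<integral>\<^sup>+x. G \<bar>x\<bar> \<partial>lborel)
      = (\<integral>\<^sup>+x. G \<bar>x\<bar> * indicator {0<..} x + G \<bar>x\<bar> * indicator {..<0} x \<partial>lborel)"
    by (intro nn_integral_cong_AE AE_I[where N="{0}"]) (auto split: split_indicator)
  also have "\<dots> = (\<integral>\<^sup>+x. G \<bar>x\<bar> * indicator {0<..} x \<partial>lborel) + (\<integral>\<^sup>+x. G \<bar>x\<bar> * indicator {..<0} x \<partial>lborel)"
    by (rule nn_integral_add) auto
  also have "(\<integral>\<^sup>+x. G \<bar>x\<bar> * indicator {..<0} x \<partial>lborel)
      = (\<integral>\<^sup>+x. G \<bar>0 + (-1) * x\<bar> * indicator {..<0} (0 + (-1) * x) \<partial>lborel)"
    by (subst nn_integral_real_affine[where c="-1" and t=0]) auto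
  also have "\<dots> = (\<integral>\<^sup>+x. G x * indicator {0<..} x \<partial>lborel)"
    by (intro nn_integral_cong) (auto split: split_indicator)
  also have "(\<integral>\<^sup>+x. G \<bar>x\<bar> * indicator {0<..} x \<partial>lborel) = (\<integral>\<^sup>+x. G x * indicator {0<..} x \<partial>lborel)"
    by (intro nn_integral_cong) (auto split: split_indicator)
  finally show ?thesis by (simp add: mult_2)
qed

lemma numeral_mult_ennreal: "0 \<le> a \<Longrightarrow> numeral n * ennreal a = ennreal (numeral n * a)"
  by (simp add: ennreal_mult)

lemma nn_integral_inverse_1_plus_square: "(\<integral>\<^sup>+s. ennreal (1 / (1 + s\<^sup>2)) \<partial>lborel) = ennreal pi"
proof -
  have "(\<integral>\<^sup>+s. ennreal (1 / (1 + s\<^sup>2)) \<partial>lborel) = 2 * (\<integral>\<^sup>+s. ennreal (1 / (1 + s\<^sup>2)) * indicator {0<..} s \<partial>lborel)"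
    using nn_integral_lborel_abs[of "\<lambda>u. ennreal (1 / (1 + u\<^sup>2))"] by simp
  also have "(\<integral>\<^sup>+s. ennreal (1 / (1 + s\<^sup>2)) * indicator {0<..} s \<partial>lborel)
      = (\<integral>\<^sup>+s. ennreal (1 / (1 + s\<^sup>2)) * indicator {0..} s \<partial>lborel)"
    by (intro nn_integral_cong_AE AE_I[where N="{0}"]) (auto split: split_indicator)
  also have "\<dots> = ennreal (pi / 2 - arctan 0)"
    by (rule nn_integral_FTC_atLeast[OF _ _ _ tendsto_arctan_at_top])
      (auto intro!: derivative_eq_intros simp: add_nonneg_eq_0_iff field_simps power2_eq_square)
  finally show ?thesis by (simp add: numeral_mult_ennreal)
qed

lemma nn_integral_lborel_abs_scaled:
  fixes F :: "real \<Rightarrow> ennreal"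
  assumes [measurable]: "F \<in> borel_measurable borel" and c: "c > 0"
  shows "(\<integral>\<^sup>+x. ennreal \<bar>x\<bar> * F (\<bar>x\<bar> * c) \<partial>lborel)
       = ennreal (2 / c\<^sup>2) * (\<integral>\<^sup>+r. ennreal r * F r * indicator {0<..} r \<partial>lborel)"
proof -
  have "(\<integral>\<^sup>+x. ennreal \<bar>x\<bar> * F (\<bar>x\<bar> * c) \<partial>lborel)
      = 2 * (\<integral>\<^sup>+x. ennreal x * F (x * c) * indicator {0<..} x \<partial>lborel)"
    using nn_integral_lborel_abs[of "\<lambda>u. ennreal u * F (u * c)"] by simp
  also have "(\<integral>\<^sup>+x. ennreal x * F (x * c) * indicator {0<..} x \<partial>lborel)
      = ennreal (1/c) * (\<integral>\<^sup>+x. ennreal (0 + 1/c * x) * F ((0 + 1/c * x) * c) * indicator {0<..} (0 + 1/c * x) \<partial>lborel)"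
    using c by (subst nn_integral_real_affine[where c="1/c" and t=0]) auto
  also have "(\<integral>\<^sup>+x. ennreal (0 + 1/c * x) * F ((0 + 1/c * x) * c) * indicator {0<..} (0 + 1/c * x) \<partial>lborel)
      = (\<integral>\<^sup>+x. ennreal (1/c) * (ennreal x * F x * indicator {0<..} x) \<partial>lborel)"
    using c by (intro nn_integral_cong)
      (auto split: split_indicator simp: ennreal_mult[symmetric] zero_less_mult_iff zero_less_divide_iff mult.assoc[symmetric])
  also have "\<dots> = ennreal (1/c) * (\<integral>\<^sup>+r. ennreal r * F r * indicator {0<..} r \<partial>lborel)"
    by (rule nn_integral_cmult) auto
  also have "2 * (ennreal (1/c) * (ennreal (1/c) * (\<integral>\<^sup>+r. ennreal r * F r * indicator {0<..} r \<partial>lborel)))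
      = ennreal (2 / c\<^sup>2) * (\<integral>\<^sup>+r. ennreal r * F r * indicator {0<..} r \<partial>lborel)"
  proof -
    have "ennreal (2 / c\<^sup>2) = 2 * (ennreal (1/c) * ennreal (1/c))"
      using c by (simp add: ennreal_mult[symmetric] power2_eq_square numeral_mult_ennreal)
    then show ?thesis by (simp add: mult.assoc)
  qed
  finally show ?thesis .
qed

lemma nn_integral_lborel_polar:
  fixes F :: "real \<Rightarrow> ennreal"
  assumes [measurable]: "F \<in> borel_measurable borel"
  shows "(\<integral>\<^sup>+x. \<integral>\<^sup>+y. F (sqrt (x\<^sup>2 + y\<^sup>2)) \<partial>lborel \<partial>lborel)
         = 2 * pi * (\<integral>\<^sup>+r. ennreal r * F r * indicator {0<..} r \<partial>lborel)"
proof -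
  define I where "I = (\<integral>\<^sup>+r. ennreal r * F r * indicator {0<..} r \<partial>lborel)"
  have slope: "(\<integral>\<^sup>+y. F (sqrt (x\<^sup>2 + y\<^sup>2)) \<partial>lborel)
      = (\<integral>\<^sup>+s. ennreal \<bar>x\<bar> * F (\<bar>x\<bar> * sqrt (1 + s\<^sup>2)) \<partial>lborel)" if "x \<noteq> 0" for x :: real
  proof -
    have "sqrt (x\<^sup>2 + (x * s)\<^sup>2) = \<bar>x\<bar> * sqrt (1 + s\<^sup>2)" for s
    proof -
      have "x\<^sup>2 + (x * s)\<^sup>2 = x\<^sup>2 * (1 + s\<^sup>2)" by (simp add: algebra_simps power_mult_distrib)
      then show ?thesis by (simp add: real_sqrt_mult)
    qed
    then show ?thesis
      using that by (subst nn_integral_real_affine[where c=x and t=0]) (auto simp: nn_integral_cmult)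
  qed
  have "(\<integral>\<^sup>+x. \<integral>\<^sup>+y. F (sqrt (x\<^sup>2 + y\<^sup>2)) \<partial>lborel \<partial>lborel)
      = (\<integral>\<^sup>+x. \<integral>\<^sup>+s. ennreal \<bar>x\<bar> * F (\<bar>x\<bar> * sqrt (1 + s\<^sup>2)) \<partial>lborel \<partial>lborel)"
    by (intro nn_integral_cong_AE AE_I[where N="{0}"]) (auto intro: slope)
  also have "\<dots> = (\<integral>\<^sup>+s. \<integral>\<^sup>+x. ennreal \<bar>x\<bar> * F (\<bar>x\<bar> * sqrt (1 + s\<^sup>2)) \<partial>lborel \<partial>lborel)"
    by (rule lborel_pair.Fubini'[symmetric]) auto
  also have "\<dots> = (\<integral>\<^sup>+s. ennreal 2 * ennreal (1 / (1 + s\<^sup>2)) * I \<partial>lborel)"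
  proof (intro nn_integral_cong)
    fix s :: real
    have "0 < sqrt (1 + s\<^sup>2)" by (simp add: add_pos_nonneg)
    then show "(\<integral>\<^sup>+x. ennreal \<bar>x\<bar> * F (\<bar>x\<bar> * sqrt (1 + s\<^sup>2)) \<partial>lborel) = ennreal 2 * ennreal (1 / (1 + s\<^sup>2)) * I"
      unfolding I_def by (simp add: nn_integral_lborel_abs_scaled numeral_mult_ennreal)
  qed
  also have "\<dots> = 2 * (\<integral>\<^sup>+s. ennreal (1 / (1 + s\<^sup>2)) \<partial>lborel) * I"
    by (simp add: nn_integral_cmult nn_integral_multc)
  also have "\<dots> = 2 * pi * I"
    by (simp add: nn_integral_inverse_1_plus_square numeral_mult_ennreal)
  finally show ?thesis unfolding I_def .
qed

lemma nn_integral_gaussian_half_line: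
  "(\<integral>\<^sup>+t. ennreal (exp (- t\<^sup>2)) * indicator {0..} t \<partial>lborel) = ennreal (sqrt pi / 2)"
proof -
  have "(\<integral>\<^sup>+t. ennreal (exp (- t\<^sup>2)) * indicator {0..} t \<partial>lborel)
      = (\<integral>\<^sup>+t. ennreal (indicator {0..} t *\<^sub>R exp (- t\<^sup>2)) \<partial>lborel)"
    by (intro nn_integral_cong) (auto split: split_indicator)
  also have "\<dots> = ennreal (sqrt pi / 2)"
    using gaussian_moment_0 by (subst nn_integral_eq_integrable) (auto simp: has_bochner_integral_iff)
  finally show ?thesis .
qed

lemma nn_integral_gaussian_second_moment_half_line:
  "(\<integral>\<^sup>+t. ennreal (t\<^sup>2 * exp (- t\<^sup>2)) * indicator {0..} t \<partial>lborel) = ennreal (sqrt pi / 4)"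
proof -
  have "(\<integral>\<^sup>+t. ennreal (t\<^sup>2 * exp (- t\<^sup>2)) * indicator {0..} t \<partial>lborel)
      = (\<integral>\<^sup>+t. ennreal (indicator {0..} t *\<^sub>R (exp (- t\<^sup>2) * t ^ (2 * 1))) \<partial>lborel)"
    by (intro nn_integral_cong) (auto split: split_indicator)
  also have "\<dots> = ennreal ((sqrt pi / 2) * (fact (2 * 1) / (2 ^ (2 * 1) * fact 1)))"
    using gaussian_moment_even_pos[of 1]
    by (subst nn_integral_eq_integrable) (auto simp: has_bochner_integral_iff)
  finally show ?thesis by (simp add: fact_numeral)
qed

lemma measurable_Complex_pair[measurable]: "(\<lambda>(x, y). Complex x y) \<in> borel_measurable (borel \<Otimes>\<^sub>M borel)"
proof -
  have "(\<lambda>(x, y). Complex x y) = (\<lambda>p. complex_of_real (fst p) + \<i> * complex_of_real (snd p))"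
    by (auto simp: fun_eq_iff complex_eq_iff)
  then show ?thesis by simp
qed

lemma normal_density_mult_normal_density:
  "normal_density 0 (s / sqrt 2) x * normal_density 0 (s / sqrt 2) y = 1 / (pi * s\<^sup>2) * exp (- (x\<^sup>2 + y\<^sup>2) / s\<^sup>2)"
proof -
  have "normal_density 0 (s / sqrt 2) x * normal_density 0 (s / sqrt 2) y
      = (1 / sqrt (pi * s\<^sup>2))\<^sup>2 * (exp (- x\<^sup>2 / s\<^sup>2) * exp (- y\<^sup>2 / s\<^sup>2))"
    unfolding normal_density_def by (simp add: power_divide power2_eq_square)
  also have "(1 / sqrt (pi * s\<^sup>2))\<^sup>2 = 1 / (pi * s\<^sup>2)" by (simp add: power_divide)
  also have "exp (- x\<^sup>2 / s\<^sup>2) * exp (- y\<^sup>2 / s\<^sup>2) = exp (- (x\<^sup>2 + y\<^sup>2) / s\<^sup>2)"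
    by (simp add: exp_add[symmetric] diff_divide_distrib)
  finally show ?thesis .
qed

lemma nn_integral_cgauss_radial:
  fixes \<phi> :: "real \<Rightarrow> ennreal"
  assumes [measurable]: "\<phi> \<in> borel_measurable borel" and s: "s > 0"
  shows "(\<integral>\<^sup>+z. \<phi> (cmod z) \<partial>cgauss s)
       = ennreal (2 / s\<^sup>2) * (\<integral>\<^sup>+r. ennreal (r * exp (- r\<^sup>2 / s\<^sup>2)) * \<phi> r * indicator {0<..} r \<partial>lborel)"
proof -
  define N where "N = normal_density 0 (s / sqrt 2)"
  define D where "D = density lborel N"
  interpret D: prob_space D unfolding D_def N_def using s by (intro prob_space_normal_density) auto
  define F where "F r = ennreal (1 / (pi * s\<^sup>2)) * ennreal (exp (- r\<^sup>2 / s\<^sup>2)) * \<phi> r" for r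
  have [measurable]: "N \<in> borel_measurable borel" "F \<in> borel_measurable borel"
    unfolding N_def F_def by measurable
  have sD: "sets D = sets borel" unfolding D_def by simp
  have "(\<integral>\<^sup>+z. \<phi> (cmod z) \<partial>cgauss s) = (\<integral>\<^sup>+p. \<phi> (cmod (case p of (x, y) \<Rightarrow> Complex x y)) \<partial>(D \<Otimes>\<^sub>M D))"
    unfolding cgauss_def D_def N_def by (subst nn_integral_distr) (auto simp: case_prod_unfold)
  also have "\<dots> = (\<integral>\<^sup>+x. \<integral>\<^sup>+y. \<phi> (sqrt (x\<^sup>2 + y\<^sup>2)) \<partial>D \<partial>D)"
  proof -
    have "(\<lambda>p. \<phi> (cmod (case p of (x, y) \<Rightarrow> Complex x y))) \<in> borel_measurable (D \<Otimes>\<^sub>M D)"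
      by (subst measurable_cong_sets[OF sets_pair_measure_cong[OF sD sD] refl]) measurable
    from D.nn_integral_fst[OF this] show ?thesis by (simp add: complex_norm)
  qed
  also have "\<dots> = (\<integral>\<^sup>+x. ennreal (N x) * (\<integral>\<^sup>+y. ennreal (N y) * \<phi> (sqrt (x\<^sup>2 + y\<^sup>2)) \<partial>lborel) \<partial>lborel)"
    unfolding D_def by (simp add: nn_integral_density)
  also have "\<dots> = (\<integral>\<^sup>+x. \<integral>\<^sup>+y. F (sqrt (x\<^sup>2 + y\<^sup>2)) \<partial>lborel \<partial>lborel)"
  proof (intro nn_integral_cong)
    fix x :: real
    have "ennreal (N x) * (\<integral>\<^sup>+y. ennreal (N y) * \<phi> (sqrt (x\<^sup>2 + y\<^sup>2)) \<partial>lborel)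
        = (\<integral>\<^sup>+y. ennreal (N x * N y) * \<phi> (sqrt (x\<^sup>2 + y\<^sup>2)) \<partial>lborel)"
      by (subst nn_integral_cmult[symmetric]) (auto simp: N_def ennreal_mult mult.assoc)
    also have "\<dots> = (\<integral>\<^sup>+y. F (sqrt (x\<^sup>2 + y\<^sup>2)) \<partial>lborel)"
      unfolding N_def F_def normal_density_mult_normal_density by (simp add: ennreal_mult'[symmetric])
    finally show "ennreal (N x) * (\<integral>\<^sup>+y. ennreal (N y) * \<phi> (sqrt (x\<^sup>2 + y\<^sup>2)) \<partial>lborel)
        = (\<integral>\<^sup>+y. F (sqrt (x\<^sup>2 + y\<^sup>2)) \<partial>lborel)" .
  qed
  also have "\<dots> = 2 * pi * (\<integral>\<^sup>+r. ennreal r * F r * indicator {0<..} r \<partial>lborel)"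
    by (rule nn_integral_lborel_polar) simp
  also have "(\<integral>\<^sup>+r. ennreal r * F r * indicator {0<..} r \<partial>lborel)
      = ennreal (1 / (pi * s\<^sup>2)) * (\<integral>\<^sup>+r. ennreal (r * exp (- r\<^sup>2 / s\<^sup>2)) * \<phi> r * indicator {0<..} r \<partial>lborel)"
    by (subst nn_integral_cmult[symmetric])
      (auto intro!: nn_integral_cong simp: F_def ennreal_mult' mult_ac split: split_indicator)
  finally show ?thesis
    using s by (simp add: ennreal_mult[symmetric] mult.assoc[symmetric] numeral_mult_ennreal)
qed

lemma nn_integral_cgauss_norm:
  assumes s: "s > 0"
  shows "(\<integral>\<^sup>+z. ennreal (cmod z) \<partial>cgauss s) = ennreal (s * sqrt pi / 2)"
proof -
  have "(\<integral>\<^sup>+z. ennreal (cmod z) \<partial>cgauss s)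
      = ennreal (2 / s\<^sup>2) * (\<integral>\<^sup>+r. ennreal (r * exp (- r\<^sup>2 / s\<^sup>2)) * ennreal r * indicator {0<..} r \<partial>lborel)"
    using s by (rule nn_integral_cgauss_radial[rotated]) simp
  also have "(\<integral>\<^sup>+r. ennreal (r * exp (- r\<^sup>2 / s\<^sup>2)) * ennreal r * indicator {0<..} r \<partial>lborel)
      = (\<integral>\<^sup>+r. ennreal (r\<^sup>2 * exp (- r\<^sup>2 / s\<^sup>2)) * indicator {0..} r \<partial>lborel)"
    by (intro nn_integral_cong_AE AE_I[where N="{0}"])
      (auto split: split_indicator simp: ennreal_mult'[symmetric] power2_eq_square mult_ac)
  also have "\<dots> = ennreal s * (\<integral>\<^sup>+t. ennreal ((0 + s * t)\<^sup>2 * exp (- (0 + s * t)\<^sup>2 / s\<^sup>2)) * indicator {0..} (0 + s * t) \<partial>lborel)"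
    using s by (subst nn_integral_real_affine[where c=s and t=0]) auto
  also have "(\<integral>\<^sup>+t. ennreal ((0 + s * t)\<^sup>2 * exp (- (0 + s * t)\<^sup>2 / s\<^sup>2)) * indicator {0..} (0 + s * t) \<partial>lborel)
      = (\<integral>\<^sup>+t. ennreal (s\<^sup>2) * (ennreal (t\<^sup>2 * exp (- t\<^sup>2)) * indicator {0..} t) \<partial>lborel)"
    using s by (intro nn_integral_cong)
      (auto split: split_indicator simp: ennreal_mult'[symmetric] power_mult_distrib zero_le_mult_iff)
  also have "\<dots> = ennreal (s\<^sup>2) * ennreal (sqrt pi / 4)"
    by (subst nn_integral_cmult) (auto simp: nn_integral_gaussian_second_moment_half_line)
  also have "ennreal (2 / s\<^sup>2) * (ennreal s * (ennreal (s\<^sup>2) * ennreal (sqrt pi / 4))) = ennreal (s * sqrt pi / 2)"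
    using s by (simp add: ennreal_mult'[symmetric] field_simps power2_eq_square)
  finally show ?thesis .
qed

lemma nn_integral_cgauss_inverse_norm:
  assumes s: "s > 0"
  shows "(\<integral>\<^sup>+z. ennreal (1 / cmod z) \<partial>cgauss s) = ennreal (sqrt pi / s)"
proof -
  have "(\<integral>\<^sup>+z. ennreal (1 / cmod z) \<partial>cgauss s)
      = ennreal (2 / s\<^sup>2) * (\<integral>\<^sup>+r. ennreal (r * exp (- r\<^sup>2 / s\<^sup>2)) * ennreal (1 / r) * indicator {0<..} r \<partial>lborel)"
    using s by (rule nn_integral_cgauss_radial[rotated]) simp
  also have "(\<integral>\<^sup>+r. ennreal (r * exp (- r\<^sup>2 / s\<^sup>2)) * ennreal (1 / r) * indicator {0<..} r \<partial>lborel)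
      = (\<integral>\<^sup>+r. ennreal (exp (- r\<^sup>2 / s\<^sup>2)) * indicator {0..} r \<partial>lborel)"
    by (intro nn_integral_cong_AE AE_I[where N="{0}"])
      (auto split: split_indicator simp: ennreal_mult'[symmetric])
  also have "\<dots> = ennreal s * (\<integral>\<^sup>+t. ennreal (exp (- (0 + s * t)\<^sup>2 / s\<^sup>2)) * indicator {0..} (0 + s * t) \<partial>lborel)"
    using s by (subst nn_integral_real_affine[where c=s and t=0]) auto
  also have "(\<integral>\<^sup>+t. ennreal (exp (- (0 + s * t)\<^sup>2 / s\<^sup>2)) * indicator {0..} (0 + s * t) \<partial>lborel)
      = (\<integral>\<^sup>+t. ennreal (exp (- t\<^sup>2)) * indicator {0..} t \<partial>lborel)"
    using s by (intro nn_integral_cong)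
      (auto split: split_indicator simp: power_mult_distrib zero_le_mult_iff)
  also have "ennreal (2 / s\<^sup>2) * (ennreal s * (\<integral>\<^sup>+t. ennreal (exp (- t\<^sup>2)) * indicator {0..} t \<partial>lborel))
      = ennreal (sqrt pi / s)"
    unfolding nn_integral_gaussian_half_line using s by (simp add: ennreal_mult'[symmetric] field_simps power2_eq_square)
  finally show ?thesis .
qed

section \<open>The zero-forcing channel penalty\<close>

lemma onorm_matrix_vector_mult_le_norm:
  "onorm ((*v) (A::real^'n^'m)) \<le> real CARD('m) * real CARD('n) * norm A"
proof (rule onorm_le_matrix_component)
  fix i j
  show "\<bar>A $ i $ j\<bar> \<le> norm A"
    using component_le_norm_cart[of "A $ i" j] Finite_Cartesian_Product.norm_nth_le[of A i] by linarith
qed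

lemma continuous_on_onorm_matrix_vector_mult:
  "continuous_on S (\<lambda>A::real^'n^'m. onorm ((*v) A))"
proof -
  have triangle: "onorm ((*v) X) \<le> onorm ((*v) Y) + onorm ((*v) (X - Y))" for X Y :: "real^'n^'m"
    using onorm_triangle[of "(*v) Y" "(*v) (X - Y)"]
    by (simp add: matrix_vector_mult_diff_rdistrib)
  have "\<bar>onorm ((*v) A) - onorm ((*v) B)\<bar> \<le> real CARD('m) * real CARD('n) * norm (A - B)"
    for A B :: "real^'n^'m"
    using triangle[of A B] triangle[of B A] onorm_matrix_vector_mult_le_norm[of "A - B"]
      onorm_matrix_vector_mult_le_norm[of "B - A"] by (simp add: norm_minus_commute abs_le_iff)
  then have "(real CARD('m) * real CARD('n))-lipschitz_on S (\<lambda>A::real^'n^'m. onorm ((*v) A))"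
    by (intro lipschitz_onI) (auto simp: dist_real_def dist_norm)
  then show ?thesis by (rule lipschitz_on_continuous_on)
qed

lemma measurable_d_ch[measurable]: "(\<lambda>w. d_ch w c) \<in> borel_measurable borel"
proof -
  have "(\<lambda>w. d_ch w c) = (\<lambda>w. onorm ((*v) (fst w - fst c)) + norm (snd w - snd c))"
    unfolding d_ch_def by (simp add: fun_eq_iff)
  also have "\<dots> \<in> borel_measurable borel"
    by (intro borel_measurable_continuous_onI continuous_intros
        continuous_on_compose2[OF continuous_on_onorm_matrix_vector_mult[of UNIV]]) auto
  finally show ?thesis .
qed

lemma d_ch_nonneg: "0 \<le> d_ch w c"
  unfolding d_ch_def by (intro add_nonneg_nonneg onorm_pos_le) auto

lemma d_ch_mat_1: "d_ch (mat 1, b) (mat 1, 0) = norm b"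
  by (simp add: d_ch_def onorm_zero)

lemma measurable_re_im[measurable]: "re_im \<in> borel_measurable borel"
proof (rule borel_measurable_continuous_onI)
  show "continuous_on UNIV re_im"
    unfolding re_im_def
  proof (rule continuous_on_vec_lambda)
    fix i :: 2
    show "continuous_on UNIV (\<lambda>z. if i = 1 then Re z else Im z)"
      by (cases "i = 1") (auto intro: continuous_intros)
  qed
qed

lemma norm_re_im: "norm (re_im z) = cmod z"
  by (simp add: norm_vec_def L2_set_def sum_2 re_im_def cmod_def)

lemma (in prob_space) indep_var_nn_integral_mult:
  fixes g h :: "_ \<Rightarrow> ennreal"
  assumes ind: "indep_var borel X borel Y"
    and [measurable]: "g \<in> borel_measurable borel" "h \<in> borel_measurable borel"
  shows "(\<integral>\<^sup>+\<omega>. g (X \<omega>) * h (Y \<omega>) \<partial>M) = (\<integral>\<^sup>+x. g x \<partial>distr M borel X) * (\<integral>\<^sup>+y. h y \<partial>distr M borel Y)"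
proof -
  have [measurable]: "X \<in> borel_measurable M" "Y \<in> borel_measurable M"
    and joint: "distr M borel X \<Otimes>\<^sub>M distr M borel Y = distr M (borel \<Otimes>\<^sub>M borel) (\<lambda>x. (X x, Y x))"
    using ind unfolding indep_var_distribution_eq by auto
  interpret DY: prob_space "distr M borel Y" by (rule prob_space_distr) simp
  have "(\<integral>\<^sup>+\<omega>. g (X \<omega>) * h (Y \<omega>) \<partial>M) = (\<integral>\<^sup>+p. g (fst p) * h (snd p) \<partial>(distr M borel X \<Otimes>\<^sub>M distr M borel Y))"
    unfolding joint by (subst nn_integral_distr) auto
  also have "\<dots> = (\<integral>\<^sup>+x. \<integral>\<^sup>+y. g x * h y \<partial>distr M borel Y \<partial>distr M borel X)"
    by (subst DY.nn_integral_fst[symmetric]) auto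
  also have "\<dots> = (\<integral>\<^sup>+x. g x * (\<integral>\<^sup>+y. h y \<partial>distr M borel Y) \<partial>distr M borel X)"
    by (intro nn_integral_cong nn_integral_cmult) auto
  also have "\<dots> = (\<integral>\<^sup>+x. g x \<partial>distr M borel X) * (\<integral>\<^sup>+y. h y \<partial>distr M borel Y)"
    by (rule nn_integral_multc) auto
  finally show ?thesis .
qed

lemma nn_integral_d_ch_zero_forcing:
  fixes H0 N0 :: "'a \<Rightarrow> complex"
  assumes "prob_space M" and [measurable]: "H0 \<in> borel_measurable M" "N0 \<in> borel_measurable M"
    and H0: "distr M borel H0 = cgauss 1" and N0: "distr M borel N0 = cgauss \<sigma>0"
    and indep: "prob_space.indep_var M borel H0 borel N0" and P: "P > 0" and \<sigma>0: "\<sigma>0 > 0"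
  shows "(\<integral>\<^sup>+w'. ennreal (d_ch w' (mat 1, 0))
           \<partial>distr M borel (\<lambda>\<omega>. (mat 1, re_im (N0 \<omega> / (complex_of_real (sqrt P) * H0 \<omega>))) :: chw))
         = ennreal (pi / (2 * sqrt (P / \<sigma>0\<^sup>2)))"
proof -
  interpret prob_space M by fact
  have [measurable]: "(\<lambda>\<omega>. (mat 1, re_im (N0 \<omega> / (complex_of_real (sqrt P) * H0 \<omega>))) :: chw) \<in> borel_measurable M"
    unfolding borel_prod[symmetric] by measurable
  have "ennreal (d_ch (mat 1, re_im (N0 \<omega> / (complex_of_real (sqrt P) * H0 \<omega>))) (mat 1, 0))
      = ennreal (1 / sqrt P) * (ennreal (1 / cmod (H0 \<omega>)) * ennreal (cmod (N0 \<omega>)))" for \<omega>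
    using P by (simp add: d_ch_mat_1 norm_re_im norm_divide norm_mult ennreal_mult[symmetric])
  then have "(\<integral>\<^sup>+w'. ennreal (d_ch w' (mat 1, 0))
           \<partial>distr M borel (\<lambda>\<omega>. (mat 1, re_im (N0 \<omega> / (complex_of_real (sqrt P) * H0 \<omega>))) :: chw))
      = ennreal (1 / sqrt P) * (\<integral>\<^sup>+\<omega>. ennreal (1 / cmod (H0 \<omega>)) * ennreal (cmod (N0 \<omega>)) \<partial>M)"
    by (subst nn_integral_distr) (auto simp: nn_integral_cmult)
  also have "(\<integral>\<^sup>+\<omega>. ennreal (1 / cmod (H0 \<omega>)) * ennreal (cmod (N0 \<omega>)) \<partial>M)
      = (\<integral>\<^sup>+x. ennreal (1 / cmod x) \<partial>cgauss 1) * (\<integral>\<^sup>+y. ennreal (cmod y) \<partial>cgauss \<sigma>0)"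
    using indep_var_nn_integral_mult[OF indep, of "\<lambda>x. ennreal (1 / cmod x)" "\<lambda>y. ennreal (cmod y)"]
    by (simp add: H0 N0)
  also have "\<dots> = ennreal (sqrt pi * (\<sigma>0 * sqrt pi / 2))"
    using \<sigma>0 by (simp add: nn_integral_cgauss_inverse_norm nn_integral_cgauss_norm ennreal_mult'[symmetric])
  also have "ennreal (1 / sqrt P) * \<dots> = ennreal (pi / (2 * sqrt (P / \<sigma>0\<^sup>2)))"
    using \<sigma>0 P by (simp add: ennreal_mult[symmetric] real_sqrt_divide field_simps)
  finally show ?thesis .
qed

section \<open>The PAC-Bayes bound\<close>

lemma nn_integral_divide_RN_deriv_le:
  fixes u :: "'t \<Rightarrow> real"
  assumes Q: "prob_space Q" and \<rho>: "prob_space \<rho>" and sets: "sets \<rho> = sets Q"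
    and ac: "absolutely_continuous Q \<rho>"
    and [measurable]: "u \<in> borel_measurable Q" and u_nonneg: "\<And>t. 0 \<le> u t"
  shows "(\<integral>\<^sup>+t. ennreal (u t / enn2real (RN_deriv Q \<rho> t)) \<partial>\<rho>) \<le> (\<integral>\<^sup>+t. ennreal (u t) \<partial>Q)"
proof -
  interpret Q: prob_space Q by (rule Q)
  interpret \<rho>: prob_space \<rho> by (rule \<rho>)
  have "(\<integral>\<^sup>+t. ennreal (u t / enn2real (RN_deriv Q \<rho> t)) \<partial>\<rho>)
      = (\<integral>\<^sup>+t. RN_deriv Q \<rho> t * ennreal (u t / enn2real (RN_deriv Q \<rho> t)) \<partial>Q)"
    by (subst Q.density_RN_deriv[OF ac sets, symmetric]) (simp add: nn_integral_density)
  also have "\<dots> \<le> (\<integral>\<^sup>+t. ennreal (u t) \<partial>Q)"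
    using Q.RN_deriv_finite[OF \<rho>.sigma_finite_measure ac sets]
  proof (intro nn_integral_mono_AE, eventually_elim)
    case (elim t)
    then obtain r where "RN_deriv Q \<rho> t = ennreal r" "0 \<le> r"
      by (cases "RN_deriv Q \<rho> t" rule: ennreal_cases) auto
    \<comment> \<open>Where the derivative vanishes, division by zero yields 0.\<close>
    then show ?case
      using u_nonneg[of t] by (cases "r = 0") (simp_all add: ennreal_mult'[symmetric])
  qed
  finally show ?thesis .
qed

lemma Donsker_Varadhan_majorant:
  fixes Q \<rho> :: "'t measure" and f :: "'t \<Rightarrow> real"
  assumes Q: "prob_space Q" and \<rho>: "prob_space \<rho>" and sets: "sets \<rho> = sets Q"
    and ac: "absolutely_continuous Q \<rho>" and int: "integrable \<rho> (entropy_density (exp 1) Q \<rho>)"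
    and f[measurable]: "f \<in> borel_measurable Q"
    and U: "(\<integral>\<^sup>+t. ennreal (exp (f t)) \<partial>Q) \<le> ennreal U"
  shows "\<exists>h. integrable \<rho> h \<and> (AE t in \<rho>. f t \<le> h t) \<and>
           (\<integral>t. h t \<partial>\<rho>) \<le> KL_divergence (exp 1) Q \<rho> + ln U"
proof -
  interpret Q: prob_space Q by (rule Q)
  interpret \<rho>: prob_space \<rho> by (rule \<rho>)
  define c where "c = enn2real (\<integral>\<^sup>+t. ennreal (exp (f t)) \<partial>Q)"
  have "(\<integral>\<^sup>+t. ennreal (exp (f t)) \<partial>Q) \<noteq> 0"
    by (simp add: nn_integral_0_iff_AE)
  moreover have "(\<integral>\<^sup>+t. ennreal (exp (f t)) \<partial>Q) < \<infinity>"
    using U by (simp add: le_less_trans)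
  ultimately have c_pos: "0 < c" and exp_f: "(\<integral>\<^sup>+t. ennreal (exp (f t)) \<partial>Q) = ennreal c"
    unfolding c_def by (auto simp: enn2real_positive_iff less_top[symmetric] zero_less_iff_neq_zero)
  have "c \<le> U"
    using U c_pos by (simp add: exp_f ennreal_le_iff2)
  then have ln_c: "ln c \<le> ln U"
    using c_pos by simp
  define g where "g t = enn2real (RN_deriv Q \<rho> t)" for t
  define y where "y t = exp (f t) / c / g t" for t
  define h where "h = (\<lambda>t. ln (g t) + ln c + y t - 1)"
  have [measurable]: "y \<in> borel_measurable \<rho>"
    unfolding y_def g_def by (simp add: measurable_cong_sets[OF sets refl])
  have y_nonneg: "0 \<le> y t" for t
    using c_pos by (simp add: y_def g_def)
  have KL: "KL_divergence (exp 1) Q \<rho> = (\<integral>t. ln (g t) \<partial>\<rho>)"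
    and int_ln: "integrable \<rho> (\<lambda>t. ln (g t))"
    using int by (simp_all add: KL_divergence_def entropy_density_def g_def log_def comp_def)
  have f_le_h: "AE t in \<rho>. f t \<le> h t"
  proof -
    have "AE t in Q. 0 < RN_deriv Q \<rho> t \<longrightarrow> 0 < g t"
      using Q.RN_deriv_finite[OF \<rho>.sigma_finite_measure ac sets]
      by eventually_elim (auto simp: g_def enn2real_positive_iff less_top)
    then have "AE t in \<rho>. 0 < g t"
      by (subst Q.density_RN_deriv[OF ac sets, symmetric]) (simp add: AE_density)
    then show ?thesis
    proof eventually_elim
      case (elim t)
      then have "ln (y t) = f t - ln c - ln (g t)"
        using c_pos by (simp add: y_def ln_div ln_mult)
      moreover have "ln (y t) \<le> y t - 1"
        using elim c_pos by (intro ln_le_minus_one) (simp add: y_def)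
      ultimately show ?case by (simp add: h_def)
    qed
  qed
  have "(\<integral>\<^sup>+t. ennreal (y t) \<partial>\<rho>) \<le> (\<integral>\<^sup>+t. ennreal (exp (f t) / c) \<partial>Q)"
    unfolding y_def g_def using c_pos by (intro nn_integral_divide_RN_deriv_le[OF Q \<rho> sets ac]) auto
  also have "\<dots> = ennreal (1 / c) * (\<integral>\<^sup>+t. ennreal (exp (f t)) \<partial>Q)"
    using c_pos by (subst nn_integral_cmult[symmetric]) (simp_all add: ennreal_mult'[symmetric])
  also have "\<dots> = 1"
    using c_pos by (simp add: exp_f ennreal_mult'[symmetric])
  finally have y_nn_le_1: "(\<integral>\<^sup>+t. ennreal (y t) \<partial>\<rho>) \<le> 1" .
  then have int_y: "integrable \<rho> y"
    using y_nonneg by (intro integrableI_nonneg) (simp_all add: le_less_trans)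
  have "(\<integral>t. y t \<partial>\<rho>) \<le> 1"
    using y_nn_le_1 int_y y_nonneg by (simp add: nn_integral_eq_integral ennreal_le_1)
  then have "(\<integral>t. h t \<partial>\<rho>) \<le> KL_divergence (exp 1) Q \<rho> + ln U"
    unfolding h_def KL using int_ln int_y ln_c by (simp add: \<rho>.prob_space)
  moreover have "integrable \<rho> h"
    unfolding h_def using int_ln int_y
    by (intro Bochner_Integration.integrable_diff Bochner_Integration.integrable_add \<rho>.integrable_const)
  ultimately show ?thesis
    using f_le_h by blast
qed

lemma Donsker_Varadhan:
  fixes Q \<rho> :: "'t measure" and f :: "'t \<Rightarrow> real"
  assumes Q: "prob_space Q" and \<rho>: "prob_space \<rho>" and sets: "sets \<rho> = sets Q"
    and ac: "absolutely_continuous Q \<rho>" and int: "integrable \<rho> (entropy_density (exp 1) Q \<rho>)"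
    and f[measurable]: "f \<in> borel_measurable Q"
    and U: "(\<integral>\<^sup>+t. ennreal (exp (f t)) \<partial>Q) \<le> ennreal U"
    and lower: "(\<integral>\<^sup>+t. ennreal (exp (- f t)) \<partial>Q) < \<infinity>"
  shows "integrable \<rho> f \<and> (\<integral>t. f t \<partial>\<rho>) \<le> KL_divergence (exp 1) Q \<rho> + ln U"
proof -
  obtain h1 where h1: "integrable \<rho> h1" "AE t in \<rho>. f t \<le> h1 t"
    "(\<integral>t. h1 t \<partial>\<rho>) \<le> KL_divergence (exp 1) Q \<rho> + ln U"
    using Donsker_Varadhan_majorant[OF Q \<rho> sets ac int f U] by blast
  \<comment> \<open>The lower exponential moment is needed only for the integrability of f.\<close>
  have "(\<integral>\<^sup>+t. ennreal (exp (- f t)) \<partial>Q) \<le> ennreal (enn2real (\<integral>\<^sup>+t. ennreal (exp (- f t)) \<partial>Q))"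
    using lower by (simp add: less_top)
  then obtain h2 where h2: "integrable \<rho> h2" "AE t in \<rho>. - f t \<le> h2 t"
    using Donsker_Varadhan_majorant[OF Q \<rho> sets ac int, of "\<lambda>t. - f t"] by auto
  have "integrable \<rho> f"
  proof (rule Bochner_Integration.integrable_bound)
    show "integrable \<rho> (\<lambda>t. \<bar>h1 t\<bar> + \<bar>h2 t\<bar>)" using h1(1) h2(1) by auto
    show "f \<in> borel_measurable \<rho>" using f by (simp add: measurable_cong_sets[OF sets refl])
    show "AE t in \<rho>. norm (f t) \<le> norm (\<bar>h1 t\<bar> + \<bar>h2 t\<bar>)"
      using h1(2) h2(2) by eventually_elim auto
  qed
  moreover have "(\<integral>t. f t \<partial>\<rho>) \<le> (\<integral>t. h1 t \<partial>\<rho>)"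
    using calculation h1(1,2) by (rule integral_mono_AE)
  ultimately show ?thesis using h1(3) by simp
qed

lemma kl_div_nonneg:
  assumes Q: "prob_space Q" and \<rho>: "prob_space \<rho>" and sets: "sets \<rho> = sets Q"
  shows "0 \<le> kl_div \<rho> Q"
proof (cases "absolutely_continuous Q \<rho> \<and> integrable \<rho> (entropy_density (exp 1) Q \<rho>)")
  case True
  interpret Q: prob_space Q by (rule Q)
  have "0 \<le> KL_divergence (exp 1) Q \<rho>"
    using Donsker_Varadhan[OF Q \<rho> sets conjunct1[OF True] conjunct2[OF True], of "\<lambda>_. 0" 1]
    by (simp add: Q.emeasure_space_1)
  then show ?thesis using True by (simp add: kl_div_def)
qed (auto simp: kl_div_def)

lemma integral_diff_le_of_integrable_diff:
  fixes g h :: "'a \<Rightarrow> real"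
  assumes int: "integrable M (\<lambda>x. g x - h x)" and le: "(\<integral>x. g x - h x \<partial>M) \<le> c" and "0 \<le> c"
  shows "(\<integral>x. g x \<partial>M) - (\<integral>x. h x \<partial>M) \<le> c"
proof (cases "integrable M g")
  case True
  moreover have "integrable M h"
    using Bochner_Integration.integrable_diff[OF True int] by simp
  ultimately show ?thesis using le by simp
next
  case False
  moreover have "\<not> integrable M h"
    using False Bochner_Integration.integrable_add[OF _ int, of h] by auto
  \<comment> \<open>Both integrals are then the junk value 0.\<close>
  ultimately show ?thesis using \<open>0 \<le> c\<close> by (simp add: not_integrable_integral_eq)
qed

lemma integral_diff_le_kl_div:
  fixes g h :: "'t \<Rightarrow> real"
  assumes Q: "prob_space Q" and \<rho>: "prob_space \<rho>" and sets: "sets \<rho> = sets Q"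
    and [measurable]: "g \<in> borel_measurable Q" "h \<in> borel_measurable Q"
    and k: "0 < k" and U: "1 \<le> U"
    and upper: "(\<integral>\<^sup>+t. ennreal (exp (k * (g t - h t))) \<partial>Q) \<le> ennreal U"
    and lower: "(\<integral>\<^sup>+t. ennreal (exp (- k * (g t - h t))) \<partial>Q) < \<infinity>"
  shows "ereal ((\<integral>t. g t \<partial>\<rho>) - (\<integral>t. h t \<partial>\<rho>)) \<le> (kl_div \<rho> Q + ereal (ln U)) / ereal k"
proof (cases "kl_div \<rho> Q")
  case (real D)
  then have ac: "absolutely_continuous Q \<rho>" and ent: "integrable \<rho> (entropy_density (exp 1) Q \<rho>)"
    and D: "D = KL_divergence (exp 1) Q \<rho>"
    by (auto simp: kl_div_def split: if_splits)
  have "integrable \<rho> (\<lambda>t. k * (g t - h t))" and k_le: "(\<integral>t. k * (g t - h t) \<partial>\<rho>) \<le> D + ln U"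
    using Donsker_Varadhan[OF Q \<rho> sets ac ent _ upper] lower D by auto
  then have "integrable \<rho> (\<lambda>t. g t - h t)"
    using k by (simp add: integrable_mult_right_iff)
  moreover have "(\<integral>t. g t - h t \<partial>\<rho>) \<le> (D + ln U) / k"
    using k_le k by (simp add: pos_le_divide_eq mult.commute)
  moreover have "0 \<le> (D + ln U) / k"
    using kl_div_nonneg[OF Q \<rho> sets] real U k by simp
  ultimately have "(\<integral>t. g t \<partial>\<rho>) - (\<integral>t. h t \<partial>\<rho>) \<le> (D + ln U) / k"
    by (rule integral_diff_le_of_integrable_diff)
  then show ?thesis
    using real k by simp
next
  case PInf
  then show ?thesis using k by simp
next
  case MInf
  with kl_div_nonneg[OF Q \<rho> sets] show ?thesis by simp
qed

lemma sub_gaussian_mgf_le: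
  assumes "sub_gaussian PZ X \<sigma>"
  shows "(\<integral>\<^sup>+z. ennreal (exp (u * (X z - (\<integral>z'. X z' \<partial>PZ)))) \<partial>PZ) \<le> ennreal (exp (u\<^sup>2 * \<sigma>\<^sup>2 / 2))"
proof -
  define E where "E = (\<integral>z. exp (u * (X z - (\<integral>z'. X z' \<partial>PZ))) \<partial>PZ)"
  from assms have int: "integrable PZ (\<lambda>z. exp (u * (X z - (\<integral>z'. X z' \<partial>PZ))))"
    and "ln E \<le> u\<^sup>2 * \<sigma>\<^sup>2 / 2"
    unfolding sub_gaussian_def E_def by auto
  then have "E \<le> exp (u\<^sup>2 * \<sigma>\<^sup>2 / 2)"
  proof (cases "0 < E")
    case True
    then show ?thesis
      using \<open>ln E \<le> u\<^sup>2 * \<sigma>\<^sup>2 / 2\<close> ln_le_cancel_iff[of E "exp (u\<^sup>2 * \<sigma>\<^sup>2 / 2)"] by simp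
  next
    case False
    then show ?thesis using exp_gt_zero[of "u\<^sup>2 * \<sigma>\<^sup>2 / 2"] by linarith
  qed
  moreover have "(\<integral>\<^sup>+z. ennreal (exp (u * (X z - (\<integral>z'. X z' \<partial>PZ)))) \<partial>PZ) = ennreal E"
    unfolding E_def using int by (subst nn_integral_eq_integral) auto
  ultimately show ?thesis by simp
qed

lemma sub_gaussian_sample_mean_mgf_le:
  assumes PZ: "prob_space PZ" and n: "n > 0" and sg: "sub_gaussian PZ X \<sigma>"
  shows "(\<integral>\<^sup>+S. ennreal (exp (u * ((\<integral>z. X z \<partial>PZ) - (1 / real n) * (\<Sum>i<n. X (S i))))) \<partial>PiM {..<n} (\<lambda>_. PZ))
         \<le> ennreal (exp (u\<^sup>2 * \<sigma>\<^sup>2 / (2 * real n)))"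
proof -
  interpret product_prob_space "\<lambda>_. PZ" "{..<n}"
    using PZ by (simp add: product_prob_space_def product_prob_space_axioms_def
        product_sigma_finite_def prob_space_imp_sigma_finite)
  have [measurable]: "X \<in> borel_measurable PZ"
    using sg by (auto simp: sub_gaussian_def)
  define m where "m = (\<integral>z. X z \<partial>PZ)"
  define v where "v = - u / real n"
  have "u * (m - (1 / real n) * (\<Sum>i<n. X (S i))) = (\<Sum>i<n. v * (X (S i) - m))" for S
  proof -
    have "(\<Sum>i<n. v * (X (S i) - m)) = v * (\<Sum>i<n. X (S i)) - real n * (v * m)"
      by (simp add: right_diff_distrib sum_subtractf sum_distrib_left[symmetric])
    then show ?thesis using n by (simp add: v_def field_simps)
  qed
  then have "(\<integral>\<^sup>+S. ennreal (exp (u * (m - (1 / real n) * (\<Sum>i<n. X (S i))))) \<partial>PiM {..<n} (\<lambda>_. PZ))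
      = (\<integral>\<^sup>+S. (\<Prod>i<n. ennreal (exp (v * (X (S i) - m)))) \<partial>PiM {..<n} (\<lambda>_. PZ))"
    by (intro nn_integral_cong) (simp add: exp_sum prod_ennreal)
  also have "\<dots> = (\<Prod>i<n. \<integral>\<^sup>+z. ennreal (exp (v * (X z - m))) \<partial>PZ)"
    by (rule product_nn_integral_prod) auto
  also have "\<dots> = (\<integral>\<^sup>+z. ennreal (exp (v * (X z - m))) \<partial>PZ) ^ n"
    by simp
  also have "\<dots> \<le> ennreal (exp (v\<^sup>2 * \<sigma>\<^sup>2 / 2)) ^ n"
    by (intro power_mono sub_gaussian_mgf_le[OF sg, of v, folded m_def]) auto
  also have "\<dots> = ennreal (exp (u\<^sup>2 * \<sigma>\<^sup>2 / (2 * real n)))"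
  proof -
    have "ennreal (exp (v\<^sup>2 * \<sigma>\<^sup>2 / 2)) ^ n = ennreal (exp (v\<^sup>2 * \<sigma>\<^sup>2 / 2) ^ n)"
      by (simp add: ennreal_power)
    also have "exp (v\<^sup>2 * \<sigma>\<^sup>2 / 2) ^ n = exp (real n * (v\<^sup>2 * \<sigma>\<^sup>2 / 2))"
      by (subst exp_of_nat_mult) simp
    also have "real n * (v\<^sup>2 * \<sigma>\<^sup>2 / 2) = u\<^sup>2 * \<sigma>\<^sup>2 / (2 * real n)"
      using n by (simp add: v_def power2_eq_square field_simps)
    finally show ?thesis .
  qed
  finally show ?thesis unfolding m_def .
qed

lemma Markov_event:
  fixes \<Phi> \<Psi> :: "'s \<Rightarrow> ennreal"
  assumes "prob_space \<Omega>" and [measurable]: "\<Phi> \<in> borel_measurable \<Omega>" "\<Psi> \<in> borel_measurable \<Omega>"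
    and \<Phi>: "(\<integral>\<^sup>+S. \<Phi> S \<partial>\<Omega>) \<le> ennreal B" and \<Psi>: "(\<integral>\<^sup>+S. \<Psi> S \<partial>\<Omega>) < \<infinity>"
    and B: "0 < B" and \<epsilon>: "0 < \<epsilon>"
  shows "\<exists>A \<in> sets \<Omega>. 1 - \<epsilon> \<le> measure \<Omega> A \<and> (\<forall>S\<in>A. \<Phi> S \<le> ennreal (B / \<epsilon>) \<and> \<Psi> S < \<infinity>)"
proof -
  interpret prob_space \<Omega> by fact
  define A where "A = {S \<in> space \<Omega>. \<Phi> S \<le> ennreal (B / \<epsilon>) \<and> \<Psi> S < \<infinity>}"
  define E where "E = {S \<in> space \<Omega>. 1 \<le> ennreal (\<epsilon> / B) * \<Phi> S}"
  have [measurable]: "A \<in> sets \<Omega>" "E \<in> sets \<Omega>"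
    unfolding A_def E_def by measurable
  have "emeasure \<Omega> E \<le> ennreal (\<epsilon> / B) * (\<integral>\<^sup>+S. \<Phi> S * indicator (space \<Omega>) S \<partial>\<Omega>)"
    unfolding E_def by (rule nn_integral_Markov_inequality) auto
  also have "(\<integral>\<^sup>+S. \<Phi> S * indicator (space \<Omega>) S \<partial>\<Omega>) = (\<integral>\<^sup>+S. \<Phi> S \<partial>\<Omega>)"
    by (intro nn_integral_cong) simp
  also have "ennreal (\<epsilon> / B) * (\<integral>\<^sup>+S. \<Phi> S \<partial>\<Omega>) \<le> ennreal (\<epsilon> / B) * ennreal B"
    by (intro mult_left_mono \<Phi>) simp
  also have "\<dots> = ennreal \<epsilon>"
    using B \<epsilon> by (simp add: ennreal_mult[symmetric])
  finally have E_small: "emeasure \<Omega> E \<le> ennreal \<epsilon>" .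
  have "AE S in \<Omega>. \<Psi> S \<noteq> \<infinity>"
    using \<Psi> by (intro nn_integral_PInf_AE) auto
  then have "AE S in \<Omega>. S \<in> space \<Omega> - A \<longrightarrow> S \<in> E"
  proof eventually_elim
    case (elim S)
    show ?case
    proof
      assume S: "S \<in> space \<Omega> - A"
      with elim have "ennreal (B / \<epsilon>) < \<Phi> S"
        by (auto simp: A_def top.not_eq_extremum)
      then have "ennreal (\<epsilon> / B) * ennreal (B / \<epsilon>) \<le> ennreal (\<epsilon> / B) * \<Phi> S"
        by (intro mult_left_mono) auto
      moreover have "ennreal (\<epsilon> / B) * ennreal (B / \<epsilon>) = 1"
        using B \<epsilon> by (simp add: ennreal_mult[symmetric])
      ultimately show "S \<in> E" using S by (simp add: E_def)
    qed
  qed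
  then have "emeasure \<Omega> (space \<Omega> - A) \<le> emeasure \<Omega> E"
    by (rule emeasure_mono_AE) simp
  with E_small have "measure \<Omega> (space \<Omega> - A) \<le> \<epsilon>"
    using \<epsilon> by (simp add: emeasure_eq_measure)
  then have "1 - \<epsilon> \<le> measure \<Omega> A"
    using prob_compl[of A] by simp
  then show ?thesis
    using \<open>A \<in> sets \<Omega>\<close> unfolding A_def by blast
qed

lemma measurable_pop_risk:
  assumes "sigma_finite_measure PZ" and "(\<lambda>(w, z). l w z) \<in> borel_measurable (MW \<Otimes>\<^sub>M PZ)"
  shows "pop_risk PZ l \<in> borel_measurable MW"
  using sigma_finite_measure.borel_measurable_lebesgue_integral[OF assms]
  by (simp add: pop_risk_def[abs_def])

lemma measurable_emp_risk:
  assumes "(\<lambda>(w, z). l w z) \<in> borel_measurable (MW \<Otimes>\<^sub>M PZ)"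
  shows "(\<lambda>(w, S). emp_risk n l w S) \<in> borel_measurable (MW \<Otimes>\<^sub>M PiM {..<n} (\<lambda>_. PZ))"
proof -
  have "(\<lambda>(w, S). l w (S i)) \<in> borel_measurable (MW \<Otimes>\<^sub>M PiM {..<n} (\<lambda>_. PZ))" if "i < n" for i
  proof -
    have "(\<lambda>(w, S). (w, S i)) \<in> MW \<Otimes>\<^sub>M PiM {..<n} (\<lambda>_. PZ) \<rightarrow>\<^sub>M MW \<Otimes>\<^sub>M PZ"
      by measurable (simp add: that)
    from measurable_compose[OF this assms] show ?thesis
      by (simp add: case_prod_beta')
  qed
  then show ?thesis
    unfolding emp_risk_def case_prod_beta'
    by (intro borel_measurable_times borel_measurable_sum) (auto simp: case_prod_beta')
qed

lemma PAC_Bayes_exp_moment: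
  fixes l :: "'t \<Rightarrow> 'z \<Rightarrow> real"
  assumes PZ: "prob_space PZ" and n: "n > 0" and Q: "prob_space Q"
    and l: "(\<lambda>(t, z). l t z) \<in> borel_measurable (Q \<Otimes>\<^sub>M PZ)"
    and subg: "\<And>t. t \<in> space Q \<Longrightarrow> sub_gaussian PZ (l t) \<sigma>"
  shows "(\<integral>\<^sup>+S. \<integral>\<^sup>+t. ennreal (exp (u * (pop_risk PZ l t - emp_risk n l t S))) \<partial>Q \<partial>PiM {..<n} (\<lambda>_. PZ))
         \<le> ennreal (exp (u\<^sup>2 * \<sigma>\<^sup>2 / (2 * real n)))"
proof -
  interpret PZ: prob_space PZ by (rule PZ)
  interpret Q: prob_space Q by (rule Q)
  interpret pair_sigma_finite Q "PiM {..<n} (\<lambda>_. PZ)"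
    by (intro pair_sigma_finite.intro Q.sigma_finite_measure prob_space_imp_sigma_finite prob_space_PiM PZ)
  have [measurable]: "pop_risk PZ l \<in> borel_measurable Q"
    "(\<lambda>(t, S). emp_risk n l t S) \<in> borel_measurable (Q \<Otimes>\<^sub>M PiM {..<n} (\<lambda>_. PZ))"
    using measurable_pop_risk[OF PZ.sigma_finite_measure l] measurable_emp_risk[OF l] by auto
  have "(\<integral>\<^sup>+S. \<integral>\<^sup>+t. ennreal (exp (u * (pop_risk PZ l t - emp_risk n l t S))) \<partial>Q \<partial>PiM {..<n} (\<lambda>_. PZ))
      = (\<integral>\<^sup>+t. \<integral>\<^sup>+S. ennreal (exp (u * (pop_risk PZ l t - emp_risk n l t S))) \<partial>PiM {..<n} (\<lambda>_. PZ) \<partial>Q)"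
    by (rule Fubini') measurable
  also have "\<dots> \<le> (\<integral>\<^sup>+t. ennreal (exp (u\<^sup>2 * \<sigma>\<^sup>2 / (2 * real n))) \<partial>Q)"
    using sub_gaussian_sample_mean_mgf_le[OF PZ n subg]
    by (intro nn_integral_mono) (simp add: pop_risk_def emp_risk_def)
  also have "\<dots> = ennreal (exp (u\<^sup>2 * \<sigma>\<^sup>2 / (2 * real n)))"
    by (simp add: Q.emeasure_space_1)
  finally show ?thesis .
qed

lemma PAC_Bayes_event:
  fixes l :: "'t \<Rightarrow> 'z \<Rightarrow> real"
  assumes PZ: "prob_space PZ" and n: "n > 0" and Q: "prob_space Q"
    and l: "(\<lambda>(t, z). l t z) \<in> borel_measurable (Q \<Otimes>\<^sub>M PZ)"
    and subg: "\<And>t. t \<in> space Q \<Longrightarrow> sub_gaussian PZ (l t) \<sigma>"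
    and \<epsilon>: "0 < \<epsilon>"
  shows "\<exists>A \<in> sets (PiM {..<n} (\<lambda>_. PZ)). 1 - \<epsilon> \<le> measure (PiM {..<n} (\<lambda>_. PZ)) A \<and> (\<forall>S\<in>A.
     (\<integral>\<^sup>+t. ennreal (exp (k * (pop_risk PZ l t - emp_risk n l t S))) \<partial>Q)
        \<le> ennreal (exp (k\<^sup>2 * \<sigma>\<^sup>2 / (2 * real n)) / \<epsilon>) \<and>
     (\<integral>\<^sup>+t. ennreal (exp (- k * (pop_risk PZ l t - emp_risk n l t S))) \<partial>Q) < \<infinity>)"
proof -
  interpret PZ: prob_space PZ by (rule PZ)
  interpret Q: prob_space Q by (rule Q)
  define PP where "PP = PiM {..<n} (\<lambda>_. PZ)"
  interpret PP: prob_space PP unfolding PP_def by (intro prob_space_PiM PZ)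
  define \<Phi> where "\<Phi> u S = (\<integral>\<^sup>+t. ennreal (exp (u * (pop_risk PZ l t - emp_risk n l t S))) \<partial>Q)" for u S
  have [measurable]: "pop_risk PZ l \<in> borel_measurable Q"
    "(\<lambda>(t, S). emp_risk n l t S) \<in> borel_measurable (Q \<Otimes>\<^sub>M PP)"
    unfolding PP_def using measurable_pop_risk[OF PZ.sigma_finite_measure l] measurable_emp_risk[OF l] by auto
  have \<Phi>_meas: "\<Phi> u \<in> borel_measurable PP" for u
  proof -
    have "(\<lambda>(S, t). ennreal (exp (u * (pop_risk PZ l t - emp_risk n l t S)))) \<in> borel_measurable (PP \<Otimes>\<^sub>M Q)"
      by (subst measurable_pair_swap_iff) simp
    from Q.borel_measurable_nn_integral_fst[OF this] show ?thesis
      by (simp add: \<Phi>_def[abs_def])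
  qed
  have \<Phi>_int: "(\<integral>\<^sup>+S. \<Phi> u S \<partial>PP) \<le> ennreal (exp (k\<^sup>2 * \<sigma>\<^sup>2 / (2 * real n)))" if "u\<^sup>2 = k\<^sup>2" for u
    using PAC_Bayes_exp_moment[OF PZ n Q l subg, of u] that unfolding \<Phi>_def PP_def by simp
  have "(\<integral>\<^sup>+S. \<Phi> (-k) S \<partial>PP) < \<infinity>"
    using \<Phi>_int[of "-k"] by (simp add: le_less_trans)
  from Markov_event[OF PP.prob_space_axioms \<Phi>_meas \<Phi>_meas \<Phi>_int[of k] this _ \<epsilon>]
  show ?thesis unfolding \<Phi>_def PP_def by simp
qed

lemma PAC_Bayes:
  fixes l :: "'t \<Rightarrow> 'z \<Rightarrow> real"
  assumes PZ: "prob_space PZ" and n: "n > 0"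
    and alg: "alg \<in> measurable (PiM {..<n} (\<lambda>_. PZ)) (prob_algebra MT)"
    and l: "(\<lambda>(t, z). l t z) \<in> borel_measurable (MT \<Otimes>\<^sub>M PZ)"
    and subg: "\<And>t. t \<in> space MT \<Longrightarrow> sub_gaussian PZ (l t) \<sigma>"
    and Q: "prob_space Q" and sets_Q: "sets Q = sets MT" and k: "k > 0" and \<epsilon>: "0 < \<epsilon>" "\<epsilon> < 1"
  shows "\<exists>A \<in> sets (PiM {..<n} (\<lambda>_. PZ)). 1 - \<epsilon> \<le> measure (PiM {..<n} (\<lambda>_. PZ)) A \<and>
     (\<forall>S\<in>A. ereal ((\<integral>t. pop_risk PZ l t \<partial>alg S) - (\<integral>t. emp_risk n l t S \<partial>alg S))
        \<le> ereal (k * \<sigma>\<^sup>2 / (2 * real n)) + (kl_div (alg S) Q - ereal (ln \<epsilon>)) / ereal k)"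
proof -
  interpret PZ: prob_space PZ by (rule PZ)
  define B where "B = exp (k\<^sup>2 * \<sigma>\<^sup>2 / (2 * real n))"
  have lQ: "(\<lambda>(t, z). l t z) \<in> borel_measurable (Q \<Otimes>\<^sub>M PZ)"
    using l by (simp add: measurable_cong_sets[OF sets_pair_measure_cong[OF sets_Q refl] refl])
  then have emp_meas: "(\<lambda>(t, S). emp_risk n l t S) \<in> borel_measurable (Q \<Otimes>\<^sub>M PiM {..<n} (\<lambda>_. PZ))"
    by (rule measurable_emp_risk)
  from PAC_Bayes_event[OF PZ n Q lQ _ \<epsilon>(1), of \<sigma> k] subg
  obtain A where A: "A \<in> sets (PiM {..<n} (\<lambda>_. PZ))" "1 - \<epsilon> \<le> measure (PiM {..<n} (\<lambda>_. PZ)) A"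
    and A_bound: "\<And>S. S \<in> A \<Longrightarrow>
      (\<integral>\<^sup>+t. ennreal (exp (k * (pop_risk PZ l t - emp_risk n l t S))) \<partial>Q) \<le> ennreal (B / \<epsilon>) \<and>
      (\<integral>\<^sup>+t. ennreal (exp (- k * (pop_risk PZ l t - emp_risk n l t S))) \<partial>Q) < \<infinity>"
    unfolding B_def by (auto simp: sets_eq_imp_space_eq[OF sets_Q])
  have "1 \<le> B" by (simp add: B_def)
  then have "1 \<le> B / \<epsilon>" using \<epsilon> by (simp add: le_divide_eq)
  have "ereal ((\<integral>t. pop_risk PZ l t \<partial>alg S) - (\<integral>t. emp_risk n l t S \<partial>alg S))
        \<le> ereal (k * \<sigma>\<^sup>2 / (2 * real n)) + (kl_div (alg S) Q - ereal (ln \<epsilon>)) / ereal k"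
    if S: "S \<in> A" for S
  proof -
    have S_space: "S \<in> space (PiM {..<n} (\<lambda>_. PZ))"
      using sets.sets_into_space[OF A(1)] S by auto
    then have "alg S \<in> space (prob_algebra MT)"
      using measurable_space[OF alg] by auto
    then have \<rho>: "prob_space (alg S)" and sets_\<rho>: "sets (alg S) = sets Q"
      using sets_Q by (auto simp: space_prob_algebra)
    have "pop_risk PZ l \<in> borel_measurable Q"
      using measurable_pop_risk[OF PZ.sigma_finite_measure lQ] .
    moreover have "(\<lambda>t. emp_risk n l t S) \<in> borel_measurable Q"
      using measurable_compose[OF measurable_Pair2'[OF S_space] emp_meas] by simp
    ultimately have "ereal ((\<integral>t. pop_risk PZ l t \<partial>alg S) - (\<integral>t. emp_risk n l t S \<partial>alg S))
        \<le> (kl_div (alg S) Q + ereal (ln (B / \<epsilon>))) / ereal k"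
      using A_bound[OF S] \<open>1 \<le> B / \<epsilon>\<close> k by (intro integral_diff_le_kl_div[OF Q \<rho> sets_\<rho>]) simp_all
    also have "\<dots> = ereal (k * \<sigma>\<^sup>2 / (2 * real n)) + (kl_div (alg S) Q - ereal (ln \<epsilon>)) / ereal k"
      using kl_div_nonneg[OF Q \<rho> sets_\<rho>] k \<epsilon>
      by (cases "kl_div (alg S) Q") (simp_all add: B_def ln_div field_simps power2_eq_square)
    finally show ?thesis .
  qed
  with A show ?thesis by blast
qed

section \<open>Deployment through the channel\<close>

lemma sets_train_dist:
  "sets \<rho> = sets MT \<Longrightarrow> sets (train_dist MT \<rho>) = sets (MT \<Otimes>\<^sub>M (borel :: chw measure))"
  unfolding train_dist_def by (intro sets_pair_measure_cong) auto

lemma nn_integral_train_dist: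
  assumes sets: "sets \<rho> = sets MT" and G[measurable]: "G \<in> borel_measurable (MT \<Otimes>\<^sub>M (borel :: chw measure))"
  shows "(\<integral>\<^sup>+w. G w \<partial>train_dist MT \<rho>) = (\<integral>\<^sup>+t. G (t, (mat 1, 0)) \<partial>\<rho>)"
proof -
  interpret R: prob_space "return borel (mat 1, 0) :: chw measure" by (rule prob_space_return) simp
  have "G \<in> borel_measurable (\<rho> \<Otimes>\<^sub>M return borel (mat 1, 0))"
    using G by (subst measurable_cong_sets[OF sets_pair_measure_cong[OF sets sets_return] refl]) auto
  then have "(\<integral>\<^sup>+w. G w \<partial>train_dist MT \<rho>) = (\<integral>\<^sup>+t. \<integral>\<^sup>+c. G (t, c) \<partial>return borel (mat 1, 0) \<partial>\<rho>)"
    unfolding train_dist_def by (rule R.nn_integral_fst[symmetric])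
  also have "\<dots> = (\<integral>\<^sup>+t. G (t, (mat 1, 0)) \<partial>\<rho>)"
    by (intro nn_integral_cong nn_integral_return) (auto simp: sets_eq_imp_space_eq[OF sets])
  finally show ?thesis .
qed

lemma integral_train_dist:
  fixes G :: "'t \<times> chw \<Rightarrow> real"
  assumes sets: "sets \<rho> = sets MT" and G[measurable]: "G \<in> borel_measurable (MT \<Otimes>\<^sub>M borel)"
    and G_nonneg: "\<And>w. 0 \<le> G w"
  shows "(\<integral>w. G w \<partial>train_dist MT \<rho>) = (\<integral>t. G (t, (mat 1, 0)) \<partial>\<rho>)"
proof -
  have [measurable]: "G \<in> borel_measurable (train_dist MT \<rho>)" "(\<lambda>t. G (t, (mat 1, 0))) \<in> borel_measurable \<rho>"
    by (simp_all add: measurable_cong_sets[OF sets_train_dist[OF sets] refl] measurable_cong_sets[OF sets refl])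
  show ?thesis
    using G_nonneg by (simp add: integral_eq_nn_integral nn_integral_train_dist[OF sets])
qed

lemma measurable_deploy_kernel:
  assumes chan: "chan \<in> measurable borel (prob_algebra borel)"
  shows "(\<lambda>w. return MT (fst w) \<Otimes>\<^sub>M chan (snd w))
           \<in> measurable (MT \<Otimes>\<^sub>M (borel :: chw measure)) (subprob_algebra (MT \<Otimes>\<^sub>M (borel :: chw measure)))"
  using measurable_prob_algebraD[OF chan]
  by (intro measurable_pair_measure measurable_compose[OF measurable_fst return_measurable]
      measurable_compose[OF measurable_snd])

lemma sets_deploy_dist:
  assumes sets: "sets \<rho> = sets MT" and chan: "chan \<in> measurable borel (prob_algebra borel)"
    and ne: "space MT \<noteq> {}"
  shows "sets (deploy_dist MT chan (train_dist MT \<rho>)) = sets (MT \<Otimes>\<^sub>M (borel :: chw measure))"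
proof -
  have "sets (chan c) = sets borel" for c
    using measurable_space[OF chan, of c] by (simp add: space_prob_algebra)
  moreover have "space (train_dist MT \<rho>) = space MT \<times> (UNIV :: chw set)"
    using sets_eq_imp_space_eq[OF sets_train_dist[OF sets]] by (simp add: space_pair_measure)
  ultimately show ?thesis
    unfolding deploy_dist_def using ne
    by (subst sets_bind[where N="MT \<Otimes>\<^sub>M borel"]) (auto intro!: sets_pair_measure_cong)
qed

lemma nn_integral_deploy_dist:
  assumes sets: "sets \<rho> = sets MT" and chan: "chan \<in> measurable borel (prob_algebra borel)"
    and G[measurable]: "G \<in> borel_measurable (MT \<Otimes>\<^sub>M (borel :: chw measure))"
  shows "(\<integral>\<^sup>+w. G w \<partial>deploy_dist MT chan (train_dist MT \<rho>))
       = (\<integral>\<^sup>+t. \<integral>\<^sup>+c. G (t, c) \<partial>chan (mat 1, 0) \<partial>\<rho>)"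
proof -
  define C where "C = chan (mat 1, 0)"
  define \<kappa> where "\<kappa> = (\<lambda>w::'a \<times> chw. return MT (fst w) \<Otimes>\<^sub>M chan (snd w))"
  have \<kappa>: "\<kappa> \<in> measurable (MT \<Otimes>\<^sub>M borel) (subprob_algebra (MT \<Otimes>\<^sub>M borel))"
    unfolding \<kappa>_def by (rule measurable_deploy_kernel[OF chan])
  have "C \<in> space (prob_algebra borel)"
    unfolding C_def using measurable_space[OF chan] by simp
  then have sC: "sets C = sets borel" and "prob_space C"
    by (auto simp: space_prob_algebra)
  interpret C: prob_space C by fact
  have GC: "G \<in> borel_measurable (MT \<Otimes>\<^sub>M C)"
    using G by (subst measurable_cong_sets[OF sets_pair_measure_cong[OF refl sC] refl])
  have "(\<integral>\<^sup>+w. G w \<partial>deploy_dist MT chan (train_dist MT \<rho>)) = (\<integral>\<^sup>+w. \<integral>\<^sup>+y. G y \<partial>\<kappa> w \<partial>train_dist MT \<rho>)"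
    unfolding deploy_dist_def \<kappa>_def[symmetric]
    by (rule nn_integral_bind[OF G]) (simp add: measurable_cong_sets[OF sets_train_dist[OF sets] refl] \<kappa>)
  also have "\<dots> = (\<integral>\<^sup>+t. \<integral>\<^sup>+y. G y \<partial>\<kappa> (t, (mat 1, 0)) \<partial>\<rho>)"
    using measurable_compose[OF \<kappa> nn_integral_measurable_subprob_algebra[OF G]]
    by (intro nn_integral_train_dist[OF sets]) simp
  also have "\<dots> = (\<integral>\<^sup>+t. \<integral>\<^sup>+c. G (t, c) \<partial>C \<partial>\<rho>)"
  proof (intro nn_integral_cong)
    fix t assume "t \<in> space \<rho>"
    then have t: "t \<in> space MT" using sets_eq_imp_space_eq[OF sets] by simp
    have "G \<in> borel_measurable (return MT t \<Otimes>\<^sub>M C)"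
      using G by (subst measurable_cong_sets[OF sets_pair_measure_cong[OF sets_return sC] refl])
    moreover have "\<kappa> (t, (mat 1, 0)) = return MT t \<Otimes>\<^sub>M C"
      by (simp add: \<kappa>_def C_def)
    ultimately have "(\<integral>\<^sup>+y. G y \<partial>\<kappa> (t, (mat 1, 0))) = (\<integral>\<^sup>+x. \<integral>\<^sup>+c. G (x, c) \<partial>C \<partial>return MT t)"
      by (simp add: C.nn_integral_fst)
    also have "\<dots> = (\<integral>\<^sup>+c. G (t, c) \<partial>C)"
      by (rule nn_integral_return[OF t C.borel_measurable_nn_integral_fst[OF GC]])
    finally show "(\<integral>\<^sup>+y. G y \<partial>\<kappa> (t, (mat 1, 0))) = (\<integral>\<^sup>+c. G (t, c) \<partial>C)" .
  qed
  finally show ?thesis unfolding C_def .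
qed

lemma nn_integral_deviation_le:
  fixes G d :: "'c \<Rightarrow> real"
  assumes "prob_space C" and [measurable]: "G \<in> borel_measurable C" "d \<in> borel_measurable C"
    and G_nonneg: "\<And>c. 0 \<le> G c" and "0 \<le> g" and "0 \<le> K"
    and G_dev: "\<And>c. \<bar>G c - g\<bar> \<le> K * d c"
    and d_int: "(\<integral>\<^sup>+c. ennreal (d c) \<partial>C) = ennreal \<Omega>"
  shows "(\<integral>\<^sup>+c. ennreal (G c) \<partial>C) \<le> ennreal g + ennreal (K * \<Omega>)"
    and "ennreal g \<le> (\<integral>\<^sup>+c. ennreal (G c) \<partial>C) + ennreal (K * \<Omega>)"
proof -
  interpret prob_space C by fact
  have Kd: "(\<integral>\<^sup>+c. ennreal (K * d c) \<partial>C) = ennreal (K * \<Omega>)"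
    using d_int \<open>0 \<le> K\<close> by (simp add: ennreal_mult' nn_integral_cmult)
  have Kd_nonneg: "0 \<le> K * d c" and G_le: "G c \<le> g + K * d c" and g_le: "g \<le> G c + K * d c" for c
    using G_dev[of c] by (auto simp: abs_le_iff)
  have "(\<integral>\<^sup>+c. ennreal (G c) \<partial>C) \<le> (\<integral>\<^sup>+c. ennreal g + ennreal (K * d c) \<partial>C)"
    using G_le \<open>0 \<le> g\<close> Kd_nonneg
    by (intro nn_integral_mono) (simp add: ennreal_plus[symmetric] del: ennreal_plus)
  also have "\<dots> = ennreal g + ennreal (K * \<Omega>)"
    by (simp add: nn_integral_add Kd emeasure_space_1)
  finally show "(\<integral>\<^sup>+c. ennreal (G c) \<partial>C) \<le> ennreal g + ennreal (K * \<Omega>)" .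
  have "ennreal g = (\<integral>\<^sup>+c. ennreal g \<partial>C)"
    by (simp add: emeasure_space_1)
  also have "\<dots> \<le> (\<integral>\<^sup>+c. ennreal (G c) + ennreal (K * d c) \<partial>C)"
    using g_le G_nonneg Kd_nonneg
    by (intro nn_integral_mono) (simp add: ennreal_plus[symmetric] del: ennreal_plus)
  also have "\<dots> = (\<integral>\<^sup>+c. ennreal (G c) \<partial>C) + ennreal (K * \<Omega>)"
    by (simp add: nn_integral_add Kd)
  finally show "ennreal g \<le> (\<integral>\<^sup>+c. ennreal (G c) \<partial>C) + ennreal (K * \<Omega>)" .
qed

lemma enn2real_le_enn2real_add:
  assumes "a' \<le> a + ennreal e" and "a \<le> a' + ennreal e" and "0 \<le> e"
  shows "enn2real a' \<le> enn2real a + e"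
proof (cases "a = \<infinity>")
  case True
  with assms(2) have "a' = \<infinity>" by (auto simp: top_unique)
  then show ?thesis using assms(3) by simp
next
  case False
  with assms(1) have "enn2real a' \<le> enn2real (a + ennreal e)"
    by (intro enn2real_mono) (auto simp: less_top)
  also have "\<dots> = enn2real a + e"
    using False assms(3) by (simp add: enn2real_plus less_top)
  finally show ?thesis .
qed

lemma nn_integral_deploy_dist_deviation:
  fixes G :: "'t \<times> chw \<Rightarrow> real"
  assumes \<rho>: "prob_space \<rho>" and sets: "sets \<rho> = sets MT"
    and chan: "chan \<in> measurable borel (prob_algebra borel)"
    and G[measurable]: "G \<in> borel_measurable (MT \<Otimes>\<^sub>M borel)" and G_nonneg: "\<And>w. 0 \<le> G w"
    and G_Lipschitz: "\<And>t c. t \<in> space MT \<Longrightarrow> \<bar>G (t, c) - G (t, (mat 1, 0))\<bar> \<le> K * d_ch c (mat 1, 0)"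
    and "0 \<le> K" and \<Omega>: "(\<integral>\<^sup>+c. ennreal (d_ch c (mat 1, 0)) \<partial>chan (mat 1, 0)) = ennreal \<Omega>"
  shows "(\<integral>\<^sup>+w. G w \<partial>deploy_dist MT chan (train_dist MT \<rho>)) \<le> (\<integral>\<^sup>+t. G (t, (mat 1, 0)) \<partial>\<rho>) + ennreal (K * \<Omega>)"
    and "(\<integral>\<^sup>+t. G (t, (mat 1, 0)) \<partial>\<rho>) \<le> (\<integral>\<^sup>+w. G w \<partial>deploy_dist MT chan (train_dist MT \<rho>)) + ennreal (K * \<Omega>)"
proof -
  interpret \<rho>: prob_space \<rho> by (rule \<rho>)
  define C where "C = chan (mat 1, 0)"
  have "C \<in> space (prob_algebra borel)"
    unfolding C_def using measurable_space[OF chan] by simp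
  then have sC: "sets C = sets borel" and "prob_space C"
    by (auto simp: space_prob_algebra)
  interpret C: prob_space C by fact
  have [measurable]: "(\<lambda>t. G (t, (mat 1, 0))) \<in> borel_measurable \<rho>"
    "(\<lambda>t. \<integral>\<^sup>+c. ennreal (G (t, c)) \<partial>C) \<in> borel_measurable \<rho>"
    using C.borel_measurable_nn_integral_fst[of "\<lambda>w. ennreal (G w)" MT]
    by (simp_all add: measurable_cong_sets[OF sets refl]
        measurable_cong_sets[OF sets_pair_measure_cong[OF refl sC] refl])
  have deviation: "(\<integral>\<^sup>+c. ennreal (G (t, c)) \<partial>C) \<le> ennreal (G (t, (mat 1, 0))) + ennreal (K * \<Omega>)"
      "ennreal (G (t, (mat 1, 0))) \<le> (\<integral>\<^sup>+c. ennreal (G (t, c)) \<partial>C) + ennreal (K * \<Omega>)"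
    if "t \<in> space \<rho>" for t
  proof -
    have t: "t \<in> space MT" using that sets_eq_imp_space_eq[OF sets] by simp
    have "(\<lambda>c. G (t, c)) \<in> borel_measurable C"
      using measurable_compose[OF measurable_Pair1'[OF t] G] by (simp add: measurable_cong_sets[OF sC refl])
    moreover have "(\<lambda>c. d_ch c (mat 1, 0)) \<in> borel_measurable C"
      by (simp add: measurable_cong_sets[OF sC refl])
    ultimately show "(\<integral>\<^sup>+c. ennreal (G (t, c)) \<partial>C) \<le> ennreal (G (t, (mat 1, 0))) + ennreal (K * \<Omega>)"
      "ennreal (G (t, (mat 1, 0))) \<le> (\<integral>\<^sup>+c. ennreal (G (t, c)) \<partial>C) + ennreal (K * \<Omega>)"
      using nn_integral_deviation_le[OF \<open>prob_space C\<close>] G_nonneg \<open>0 \<le> K\<close> G_Lipschitz[OF t] \<Omega>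
      unfolding C_def by blast+
  qed
  have deployed: "(\<integral>\<^sup>+w. G w \<partial>deploy_dist MT chan (train_dist MT \<rho>)) = (\<integral>\<^sup>+t. \<integral>\<^sup>+c. ennreal (G (t, c)) \<partial>C \<partial>\<rho>)"
    unfolding C_def by (rule nn_integral_deploy_dist[OF sets chan]) simp
  have "(\<integral>\<^sup>+t. \<integral>\<^sup>+c. ennreal (G (t, c)) \<partial>C \<partial>\<rho>) \<le> (\<integral>\<^sup>+t. ennreal (G (t, (mat 1, 0))) + ennreal (K * \<Omega>) \<partial>\<rho>)"
    by (intro nn_integral_mono deviation)
  also have "\<dots> = (\<integral>\<^sup>+t. G (t, (mat 1, 0)) \<partial>\<rho>) + ennreal (K * \<Omega>)"
    by (simp add: nn_integral_add \<rho>.emeasure_space_1)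
  finally show "(\<integral>\<^sup>+w. G w \<partial>deploy_dist MT chan (train_dist MT \<rho>)) \<le> (\<integral>\<^sup>+t. G (t, (mat 1, 0)) \<partial>\<rho>) + ennreal (K * \<Omega>)"
    unfolding deployed .
  have "(\<integral>\<^sup>+t. G (t, (mat 1, 0)) \<partial>\<rho>) \<le> (\<integral>\<^sup>+t. (\<integral>\<^sup>+c. ennreal (G (t, c)) \<partial>C) + ennreal (K * \<Omega>) \<partial>\<rho>)"
    by (intro nn_integral_mono deviation)
  also have "\<dots> = (\<integral>\<^sup>+t. \<integral>\<^sup>+c. ennreal (G (t, c)) \<partial>C \<partial>\<rho>) + ennreal (K * \<Omega>)"
    by (simp add: nn_integral_add \<rho>.emeasure_space_1)
  finally show "(\<integral>\<^sup>+t. G (t, (mat 1, 0)) \<partial>\<rho>) \<le> (\<integral>\<^sup>+w. G w \<partial>deploy_dist MT chan (train_dist MT \<rho>)) + ennreal (K * \<Omega>)"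
    unfolding deployed .
qed

lemma integral_deploy_dist_le:
  fixes G :: "'t \<times> chw \<Rightarrow> real"
  assumes \<rho>: "prob_space \<rho>" and sets: "sets \<rho> = sets MT"
    and chan: "chan \<in> measurable borel (prob_algebra borel)"
    and G[measurable]: "G \<in> borel_measurable (MT \<Otimes>\<^sub>M borel)" and G_nonneg: "\<And>w. 0 \<le> G w"
    and G_Lipschitz: "\<And>t c. t \<in> space MT \<Longrightarrow> \<bar>G (t, c) - G (t, (mat 1, 0))\<bar> \<le> K * d_ch c (mat 1, 0)"
    and "0 \<le> K" and "0 \<le> \<Omega>"
    and \<Omega>: "(\<integral>\<^sup>+c. ennreal (d_ch c (mat 1, 0)) \<partial>chan (mat 1, 0)) = ennreal \<Omega>"
  shows "(\<integral>w. G w \<partial>deploy_dist MT chan (train_dist MT \<rho>)) \<le> (\<integral>t. G (t, (mat 1, 0)) \<partial>\<rho>) + K * \<Omega>"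
proof -
  interpret \<rho>: prob_space \<rho> by (rule \<rho>)
  have "space MT \<noteq> {}"
    using \<rho>.not_empty sets_eq_imp_space_eq[OF sets] by simp
  then have "G \<in> borel_measurable (deploy_dist MT chan (train_dist MT \<rho>))"
    by (simp add: measurable_cong_sets[OF sets_deploy_dist[OF sets chan] refl])
  moreover have "(\<lambda>t. G (t, (mat 1, 0))) \<in> borel_measurable \<rho>"
    by (simp add: measurable_cong_sets[OF sets refl])
  ultimately show ?thesis
    using nn_integral_deploy_dist_deviation[OF assms(1-7,9)] G_nonneg \<open>0 \<le> K\<close> \<open>0 \<le> \<Omega>\<close>
    by (simp add: integral_eq_nn_integral enn2real_le_enn2real_add)
qed

lemma abs_pop_risk_diff_le:
  assumes "prob_space PZ" and "integrable PZ (l w)" "integrable PZ (l w')"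
    and "\<And>z. z \<in> space PZ \<Longrightarrow> \<bar>l w z - l w' z\<bar> \<le> c"
  shows "\<bar>pop_risk PZ l w - pop_risk PZ l w'\<bar> \<le> c"
proof -
  interpret prob_space PZ by fact
  have "\<bar>pop_risk PZ l w - pop_risk PZ l w'\<bar> = \<bar>\<integral>z. l w z - l w' z \<partial>PZ\<bar>"
    using assms(2,3) by (simp add: pop_risk_def)
  also have "\<dots> \<le> (\<integral>z. \<bar>l w z - l w' z\<bar> \<partial>PZ)"
    by (rule integral_abs_bound)
  also have "\<dots> \<le> (\<integral>z. c \<partial>PZ)"
    using assms by (intro integral_mono) auto
  finally show ?thesis by (simp add: prob_space)
qed

lemma pop_risk_channel_Lipschitz:
  fixes loss :: "'t \<times> chw \<Rightarrow> 'z \<Rightarrow> real"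
  assumes PZ: "prob_space PZ" and dt: "is_metric_on (space MT) dt"
    and subg: "\<And>w. w \<in> space MT \<times> UNIV \<Longrightarrow> sub_gaussian PZ (loss w) \<sigma>"
    and lip: "\<And>w w' z. w \<in> space MT \<times> UNIV \<Longrightarrow> w' \<in> space MT \<times> UNIV \<Longrightarrow> z \<in> space PZ \<Longrightarrow>
               \<bar>loss w z - loss w' z\<bar> \<le> K * d_W dt w w'"
    and t: "t \<in> space MT"
  shows "\<bar>pop_risk PZ loss (t, c) - pop_risk PZ loss (t, c')\<bar> \<le> K * d_ch c c'"
proof (rule abs_pop_risk_diff_le[OF PZ])
  show "integrable PZ (loss (t, c))" "integrable PZ (loss (t, c'))"
    using subg t by (auto simp: sub_gaussian_def)
  have "dt t t = 0"
    using dt t by (simp add: is_metric_on_def)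
  then show "\<bar>loss (t, c) z - loss (t, c') z\<bar> \<le> K * d_ch c c'" if "z \<in> space PZ" for z
    using lip[of "(t, c)" "(t, c')" z] t that by (simp add: d_W_def)
qed

lemma deployment_gap_le:
  fixes loss :: "'t \<times> chw \<Rightarrow> 'z \<Rightarrow> real"
  assumes PZ: "prob_space PZ" and \<rho>: "prob_space \<rho>" and sets: "sets \<rho> = sets MT"
    and chan: "chan \<in> measurable borel (prob_algebra borel)"
    and loss_meas: "(\<lambda>(w, z). loss w z) \<in> borel_measurable ((MT \<Otimes>\<^sub>M borel) \<Otimes>\<^sub>M PZ)"
    and loss_nonneg: "\<And>w z. loss w z \<ge> 0"
    and S: "S \<in> space (PiM {..<n} (\<lambda>_. PZ))"
    and Lipschitz: "\<And>t c. t \<in> space MT \<Longrightarrow>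
          \<bar>pop_risk PZ loss (t, c) - pop_risk PZ loss (t, (mat 1, 0))\<bar> \<le> K * d_ch c (mat 1, 0)"
    and "0 \<le> \<Omega>" and penalty: "(\<integral>\<^sup>+c. ennreal (d_ch c (mat 1, 0)) \<partial>chan (mat 1, 0)) = ennreal \<Omega>"
  shows "(\<integral>w. pop_risk PZ loss w \<partial>deploy_dist MT chan (train_dist MT \<rho>))
           - (\<integral>w. emp_risk n loss w S \<partial>train_dist MT \<rho>)
         \<le> (\<integral>t. pop_risk PZ loss (t, (mat 1, 0)) \<partial>\<rho>) - (\<integral>t. emp_risk n loss (t, (mat 1, 0)) S \<partial>\<rho>) + K * \<Omega>"
proof -
  interpret PZ: prob_space PZ by (rule PZ)
  have [measurable]: "pop_risk PZ loss \<in> borel_measurable (MT \<Otimes>\<^sub>M borel)"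
    using measurable_pop_risk[OF PZ.sigma_finite_measure loss_meas] .
  have "(\<lambda>w. emp_risk n loss w S) \<in> borel_measurable (MT \<Otimes>\<^sub>M borel)"
    using measurable_compose[OF measurable_Pair2'[OF S] measurable_emp_risk[OF loss_meas]] by simp
  have risk_nonneg: "0 \<le> pop_risk PZ loss w" "0 \<le> emp_risk n loss w S'" for w S'
    unfolding pop_risk_def emp_risk_def
    by (auto intro!: Bochner_Integration.integral_nonneg divide_nonneg_nonneg sum_nonneg loss_nonneg)
  have "space MT \<noteq> {}"
    using prob_space.not_empty[OF \<rho>] sets_eq_imp_space_eq[OF sets] by simp
  then obtain t where "t \<in> space MT" by blast
  then have "0 \<le> K"
    using Lipschitz[of t "(mat 1, re_im 1)"] by (simp add: d_ch_mat_1 norm_re_im)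
  have "(\<integral>w. pop_risk PZ loss w \<partial>deploy_dist MT chan (train_dist MT \<rho>))
      \<le> (\<integral>t. pop_risk PZ loss (t, (mat 1, 0)) \<partial>\<rho>) + K * \<Omega>"
    by (rule integral_deploy_dist_le[OF \<rho> sets chan _ _ Lipschitz \<open>0 \<le> K\<close> \<open>0 \<le> \<Omega>\<close> penalty])
      (simp_all add: risk_nonneg)
  moreover have "(\<integral>w. emp_risk n loss w S \<partial>train_dist MT \<rho>) = (\<integral>t. emp_risk n loss (t, (mat 1, 0)) S \<partial>\<rho>)"
    by (rule integral_train_dist[OF sets]) (simp_all add: risk_nonneg \<open>(\<lambda>w. emp_risk n loss w S) \<in> _\<close>)
  ultimately show ?thesis by simp
qed

lemma deployed_PAC_Bayes:
  fixes loss :: "'t \<times> chw \<Rightarrow> 'z \<Rightarrow> real"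
  assumes PZ: "prob_space PZ" and n: "n > 0"
    and alg: "alg \<in> measurable (PiM {..<n} (\<lambda>_. PZ)) (prob_algebra MT)"
    and loss_meas: "(\<lambda>(w, z). loss w z) \<in> borel_measurable ((MT \<Otimes>\<^sub>M borel) \<Otimes>\<^sub>M PZ)"
    and loss_nonneg: "\<And>w z. loss w z \<ge> 0"
    and subg: "\<And>t. t \<in> space MT \<Longrightarrow> sub_gaussian PZ (loss (t, (mat 1, 0))) \<sigma>"
    and chan: "chan \<in> measurable borel (prob_algebra borel)"
    and Lipschitz: "\<And>t c. t \<in> space MT \<Longrightarrow>
          \<bar>pop_risk PZ loss (t, c) - pop_risk PZ loss (t, (mat 1, 0))\<bar> \<le> K * d_ch c (mat 1, 0)"
    and "0 \<le> \<Omega>" and penalty: "(\<integral>\<^sup>+c. ennreal (d_ch c (mat 1, 0)) \<partial>chan (mat 1, 0)) = ennreal \<Omega>"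
    and Q: "prob_space Q" "sets Q = sets MT" and k: "k > 0" and \<epsilon>: "0 < \<epsilon>" "\<epsilon> < 1"
  shows "\<exists>A \<in> sets (PiM {..<n} (\<lambda>_. PZ)). 1 - \<epsilon> \<le> measure (PiM {..<n} (\<lambda>_. PZ)) A \<and>
     (\<forall>S\<in>A. ereal ((\<integral>w. pop_risk PZ loss w \<partial>deploy_dist MT chan (train_dist MT (alg S)))
                    - (\<integral>w. emp_risk n loss w S \<partial>train_dist MT (alg S)))
        \<le> ereal (k * \<sigma>\<^sup>2 / (2 * real n)) + (kl_div (alg S) Q - ereal (ln \<epsilon>)) / ereal k + ereal (K * \<Omega>))"
proof -
  have "(\<lambda>(t, z). ((t, (mat 1, 0) :: chw), z)) \<in> MT \<Otimes>\<^sub>M PZ \<rightarrow>\<^sub>M (MT \<Otimes>\<^sub>M borel) \<Otimes>\<^sub>M PZ"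
    by measurable
  from measurable_compose[OF this loss_meas]
  have "(\<lambda>(t, z). loss (t, (mat 1, 0)) z) \<in> borel_measurable (MT \<Otimes>\<^sub>M PZ)"
    by (simp add: case_prod_beta')
  from PAC_Bayes[OF PZ n alg this subg Q k \<epsilon>]
  obtain A where A: "A \<in> sets (PiM {..<n} (\<lambda>_. PZ))" "1 - \<epsilon> \<le> measure (PiM {..<n} (\<lambda>_. PZ)) A"
    and gap: "\<And>S. S \<in> A \<Longrightarrow>
      ereal ((\<integral>t. pop_risk PZ loss (t, (mat 1, 0)) \<partial>alg S) - (\<integral>t. emp_risk n loss (t, (mat 1, 0)) S \<partial>alg S))
        \<le> ereal (k * \<sigma>\<^sup>2 / (2 * real n)) + (kl_div (alg S) Q - ereal (ln \<epsilon>)) / ereal k"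
    by (auto simp: pop_risk_def emp_risk_def)
  have "ereal ((\<integral>w. pop_risk PZ loss w \<partial>deploy_dist MT chan (train_dist MT (alg S)))
                - (\<integral>w. emp_risk n loss w S \<partial>train_dist MT (alg S)))
        \<le> ereal (k * \<sigma>\<^sup>2 / (2 * real n)) + (kl_div (alg S) Q - ereal (ln \<epsilon>)) / ereal k + ereal (K * \<Omega>)"
    if "S \<in> A" for S
  proof -
    have S: "S \<in> space (PiM {..<n} (\<lambda>_. PZ))"
      using sets.sets_into_space[OF A(1)] that by auto
    then have "alg S \<in> space (prob_algebra MT)"
      using measurable_space[OF alg] by simp
    then have "prob_space (alg S)" "sets (alg S) = sets MT"
      by (auto simp: space_prob_algebra)
    from deployment_gap_le[OF PZ this chan loss_meas loss_nonneg S Lipschitz \<open>0 \<le> \<Omega>\<close> penalty]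
    have "ereal ((\<integral>w. pop_risk PZ loss w \<partial>deploy_dist MT chan (train_dist MT (alg S)))
                - (\<integral>w. emp_risk n loss w S \<partial>train_dist MT (alg S)))
        \<le> ereal ((\<integral>t. pop_risk PZ loss (t, (mat 1, 0)) \<partial>alg S) - (\<integral>t. emp_risk n loss (t, (mat 1, 0)) S \<partial>alg S))
          + ereal (K * \<Omega>)"
      by simp
    also have "\<dots> \<le> ereal (k * \<sigma>\<^sup>2 / (2 * real n)) + (kl_div (alg S) Q - ereal (ln \<epsilon>)) / ereal k + ereal (K * \<Omega>)"
      by (rule add_right_mono[OF gap[OF that]])
    finally show ?thesis .
  qed
  with A show ?thesis by blast
qed

theorem mainTheorem5:
  fixes MT :: "'t measure"           \<comment> \<open>measurable space of learnable weights\<close>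
    and dt :: "'t \<Rightarrow> 't \<Rightarrow> real"    \<comment> \<open>metric on learnable weights (sum of the layer metrics)\<close>
    and PZ :: "'z measure"           \<comment> \<open>data distribution\<close>
    and n :: nat
    and alg :: "(nat \<Rightarrow> 'z) \<Rightarrow> 't measure"  \<comment> \<open>learning algorithm P_{W~|S}\<close>
    and loss :: "('t \<times> chw) \<Rightarrow> 'z \<Rightarrow> real"
    and \<sigma> K :: real
    and M :: "'a measure" and H0 N0 :: "'a \<Rightarrow> complex"
    and P \<sigma>0 :: real
    and chan :: "chw \<Rightarrow> chw measure"  \<comment> \<open>channel kernel\<close>
  assumes PZ: "prob_space PZ"
    and n: "n > 0"
    and alg: "alg \<in> measurable (PiM {..<n} (\<lambda>_. PZ)) (prob_algebra MT)"
    and dt: "is_metric_on (space MT) dt"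
    and loss_meas: "(\<lambda>(w, z). loss w z) \<in> borel_measurable ((MT \<Otimes>\<^sub>M borel) \<Otimes>\<^sub>M PZ)"
    and loss_nonneg: "\<And>w z. loss w z \<ge> 0"
    and subg: "\<And>w. w \<in> space MT \<times> UNIV \<Longrightarrow> sub_gaussian PZ (loss w) \<sigma>"
    and lip: "\<And>w w' z. w \<in> space MT \<times> UNIV \<Longrightarrow> w' \<in> space MT \<times> UNIV \<Longrightarrow> z \<in> space PZ \<Longrightarrow>
               \<bar>loss w z - loss w' z\<bar> \<le> K * d_W dt w w'"
    and M: "prob_space M"
    and H0_meas: "H0 \<in> borel_measurable M" and N0_meas: "N0 \<in> borel_measurable M"
    and H0_dist: "distr M borel H0 = cgauss 1"
    and N0_dist: "distr M borel N0 = cgauss \<sigma>0"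
    and indep: "prob_space.indep_var M borel H0 borel N0"
    and P: "P > 0" and \<sigma>0: "\<sigma>0 > 0"
    and chan_kernel: "chan \<in> measurable borel (prob_algebra borel)"
    and chan_I0: "chan (mat 1, 0) =
          distr M borel (\<lambda>\<omega>. (mat 1, re_im (N0 \<omega> / (complex_of_real (sqrt P) * H0 \<omega>))))"
  shows
    "(let \<gamma> = P / \<sigma>0\<^sup>2 in
       (\<integral>w'. d_ch w' (mat 1, 0) \<partial>chan (mat 1, 0)) = pi / (2 * sqrt \<gamma>) \<and>
       (\<forall>Q. sets Q = sets MT \<longrightarrow> prob_space Q \<longrightarrow>
         (\<forall>k>0. \<forall>\<epsilon>. 0 < \<epsilon> \<and> \<epsilon> < 1 \<longrightarrow>
           (\<exists>A \<in> sets (PiM {..<n} (\<lambda>_. PZ)).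
              measure (PiM {..<n} (\<lambda>_. PZ)) A \<ge> 1 - \<epsilon> \<and>
              (\<forall>S\<in>A.
                 let PW = train_dist MT (alg S);
                     PW' = deploy_dist MT chan PW;
                     \<Delta> = (\<integral>w. pop_risk PZ loss w \<partial>PW') - (\<integral>w. emp_risk n loss w S \<partial>PW)
                 in ereal \<Delta> \<le> ereal (k * \<sigma>\<^sup>2 / (2 * real n))
                       + (kl_div (alg S) Q - ereal (ln \<epsilon>)) / ereal k
                       + ereal (pi * K / (2 * sqrt \<gamma>)))))))"
proof -
  define \<gamma> where "\<gamma> = P / \<sigma>0\<^sup>2"
  define \<Omega> where "\<Omega> = pi / (2 * sqrt \<gamma>)"
  have "0 \<le> \<Omega>"
    using P \<sigma>0 by (simp add: \<Omega>_def \<gamma>_def)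
  have penalty: "(\<integral>\<^sup>+c. ennreal (d_ch c (mat 1, 0)) \<partial>chan (mat 1, 0)) = ennreal \<Omega>"
    unfolding chan_I0 \<Omega>_def \<gamma>_def
    by (rule nn_integral_d_ch_zero_forcing[OF M H0_meas N0_meas H0_dist N0_dist indep P \<sigma>0])
  have "sets (chan (mat 1, 0)) = sets borel"
    using measurable_space[OF chan_kernel, of "(mat 1, 0)"] by (simp add: space_prob_algebra)
  then have "(\<integral>w'. d_ch w' (mat 1, 0) \<partial>chan (mat 1, 0)) = \<Omega>"
    using penalty \<open>0 \<le> \<Omega>\<close>
    by (simp add: integral_eq_nn_integral d_ch_nonneg measurable_cong_sets[of "chan (mat 1, 0)" borel])
  moreover have "K * \<Omega> = pi * K / (2 * sqrt \<gamma>)"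
    by (simp add: \<Omega>_def)
  moreover note deployed_PAC_Bayes[OF PZ n alg loss_meas loss_nonneg _ chan_kernel
      pop_risk_channel_Lipschitz[OF PZ dt subg lip] \<open>0 \<le> \<Omega>\<close> penalty]
  ultimately show ?thesis
    using subg unfolding Let_def \<gamma>_def[symmetric] \<Omega>_def[symmetric] by auto
qed

end
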